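(* Let $d\ge1$ and $0\le k\le d$, and let $W=V^{\otimes d}\otimes_{\mathbb C\mathfrak S_d}\mathbb C\mathfrak S_{d+k}\subset\overline T_d(V)$, with $\mathbb C\mathfrak S_{d+k}$ acting on $W$ by right multiplication (identified with its image in $\mathrm{End}_{\mathbb C}(W)$). Let $\mathcal A_d^k\subset\mathrm{End}_{\mathbb C}(W)$ be the linear span of all operators $L(w_d)\cdots L(w_1)L(\sigma)L(v_1^\ast)\cdots L(v_d^\ast)$ (restricted to $W$) with $w_1,\dots,w_d\in V$, $\sigma\in\mathfrak S_{d+k}$, $v_1^\ast,\dots,v_d^\ast\in V^\ast$. Then $$\mathcal A_d^k=\mathrm{End}_{\mathbb C\mathfrak S_{d+k}}(W)\qquad\text{and}\qquad \mathrm{End}_{\mathcal A_d^k}(W)=\mathbb C\mathfrak S_{d+k}.$$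
   Context: Let $m,n\ge 1$ and $V=\mathbb C^{m|n}$ with standard basis $e_1,\dots,e_{m+n}$, where $|e_i|=0$ for $i\le m$ and $|e_i|=1$ for $i>m$; let $e_1^\ast,\dots,e_{m+n}^\ast$ be the dual basis with $|e_i^\ast|=|e_i|$. All vectors are homogeneous. A pure tensor $v_d\otimes\cdots\otimes v_1\in V^{\otimes d}$ is written $v_d\cdots v_1$ (factors indexed decreasingly from left to right). $\mathfrak S_d$ is the symmetric group on $\{1,\dots,d\}$, $s_i=(i\ i+1)$, $\mathfrak S_\infty=\bigcup_d\mathfrak S_d$, and for $k\ge1$ the group homomorphism $\sigma\mapsto\sigma^{\uparrow k}$ of $\mathfrak S_\infty$ is defined by $s_i^{\uparrow k}=s_{i+k}$. The right action of $\mathfrak S_d$ on $V^{\otimes d}$ is $(v_d\cdots v_1).s_i=(-1)^{|v_i||v_{i+1}|}v_d\cdots v_{i+2}v_iv_{i+1}v_{i-1}\cdots v_1$ (the factors in positions $i,i+1$ are swapped). Set $\overline T_d(V)=V^{\otimes d}\otimes_{\mathbb C\mathfrak S_d}\mathbb C\mathfrak S_\infty$ (so $\overline T_0(V)=\mathbb C\mathfrak S_\infty$) and $\overline T(V)=\bigoplus_{d\ge0}\overline T_d(V)$, with the associative product $(u_k\cdots u_1\otimes\tau)\cdot(v_d\cdots v_1\otimes\sigma)=u_k\cdots u_1v_d\cdots v_1\otimes\tau^{\uparrow d}\sigma$. For $\varphi\in\overline T(V)$, $L(\varphi)$ denotes left multiplication by $\varphi$; in particular $L(v)$ for $v\in V$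 (identified with $v\otimes 1\in\overline T_1(V)$) and $L(\sigma)$ for $\sigma\in\mathfrak S_\infty$ (identified with $1\otimes\sigma\in\overline T_0(V)$). For homogeneous $v^\ast\in V^\ast$, $L(v^\ast)$ is the linear map with $L(v^\ast)=0$ on $\overline T_0(V)$ and $$L(v^\ast)(v_d\cdots v_1\otimes\sigma)=\sum_{k=1}^d(-1)^{|v^\ast|(|v_d|+\cdots+|v_{k+1}|)}\langle v^\ast,v_k\rangle\, v_d\cdots\widehat{v_k}\cdots v_1\otimes s_{d-1}s_{d-2}\cdots s_k\,\sigma,$$ where $\widehat{v_k}$ means omission and the product $s_{d-1}\cdots s_k$ is $1$ for $k=d$; $L$ is extended linearly to all of $V^\ast$. For a subset $A$ of $\mathrm{End}_{\mathbb C}(W)$, $\mathrm{End}_A(W)$ denotes its commutant. *)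

theory Defs
  imports Complex_Main "HOL-Combinatorics.Permutations"
begin

text \<open>
V = C^{m|n} has basis e_1..e_{m+n}; e_a is odd iff m < a.
A pure tensor e_{a_d} ... e_{a_1} (x) sigma of the free space
V^{(x)j} (x) C S_infinity is encoded by the index (xs, sigma) where
xs = [a_d, ..., a_1] (head = leftmost factor, so the factor in position i
is xs ! (length xs - i)) and sigma :: nat => nat is a finitary permutation
of {1,2,...}.  Vectors of the free space are functions idx => complex
(finitely supported where it matters); the relevant quotients
(tensor product over C S_d) are handled by working modulo the subspace of
relations.
\<close>

type_synonym idx = "nat list \<times> (nat \<Rightarrow> nat)"
type_synonym vec = "idx \<Rightarrow> complex"

definition delta :: "idx \<Rightarrow> vec" where
  "delta x = (\<lambda>y. if y = x then 1 else 0)"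

definition lin_ext :: "(idx \<Rightarrow> vec) \<Rightarrow> vec \<Rightarrow> vec" where
  "lin_ext g f = (\<lambda>y. \<Sum>x\<in>{x. f x \<noteq> 0}. f x * g x y)"

definition cspan :: "vec set \<Rightarrow> vec set" where
  "cspan B = {f. \<exists>S c. finite S \<and> S \<subseteq> B \<and> f = (\<lambda>y. \<Sum>b\<in>S. c b * b y)}"

definition cspan_op :: "(vec \<Rightarrow> vec) set \<Rightarrow> (vec \<Rightarrow> vec) set" where
  "cspan_op G = {T. \<exists>S c. finite S \<and> S \<subseteq> G \<and> T = (\<lambda>f y. \<Sum>g\<in>S. c g * g f y)}"

definition is_odd :: "nat \<Rightarrow> nat \<Rightarrow> bool" where
  "is_odd m a \<longleftrightarrow> m < a"

definition s :: "nat \<Rightarrow> nat \<Rightarrow> nat" where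
  "s i = (\<lambda>j. if j = i then Suc i else if j = Suc i then i else j)"

definition shift :: "nat \<Rightarrow> (nat \<Rightarrow> nat) \<Rightarrow> nat \<Rightarrow> nat" where
  "shift k \<sigma> = (\<lambda>i. if i \<le> k then i else \<sigma> (i - k) + k)"

fun cyc :: "nat \<Rightarrow> nat \<Rightarrow> nat \<Rightarrow> nat" where
  "cyc k 0 = id"
| "cyc k (Suc j) = (if k \<le> j then s j \<circ> cyc k j else id)"

definition L_vec :: "nat \<Rightarrow> nat \<Rightarrow> (nat \<Rightarrow> complex) \<Rightarrow> vec \<Rightarrow> vec" where
  "L_vec m n c = lin_ext (\<lambda>(xs, \<sigma>) y. \<Sum>a\<in>{1..m+n}. c a * delta (a # xs, \<sigma>) y)"

definition L_perm :: "(nat \<Rightarrow> nat) \<Rightarrow> vec \<Rightarrow> vec" where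
  "L_perm \<rho> = lin_ext (\<lambda>(xs, \<sigma>). delta (xs, shift (length xs) \<rho> \<circ> \<sigma>))"

text \<open>L(e_a^*) on a basis tensor (position k factor is xs ! (length xs - k))\<close>
definition L_dual_basis :: "nat \<Rightarrow> nat \<Rightarrow> idx \<Rightarrow> vec" where
  "L_dual_basis m a = (\<lambda>(xs, \<sigma>) y. \<Sum>k\<in>{1..length xs}.
      (if xs ! (length xs - k) = a then
         (-1) ^ (if is_odd m a then length (filter (is_odd m) (take (length xs - k) xs)) else 0)
         * delta (take (length xs - k) xs @ drop (length xs - k + 1) xs,
                  cyc k (length xs) \<circ> \<sigma>) y
       else 0))"

definition L_dual :: "nat \<Rightarrow> nat \<Rightarrow> (nat \<Rightarrow> complex) \<Rightarrow> vec \<Rightarrow> vec" where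
  "L_dual m n c = lin_ext (\<lambda>x y. \<Sum>a\<in>{1..m+n}. c a * L_dual_basis m a x y)"

definition W_idx :: "nat \<Rightarrow> nat \<Rightarrow> nat \<Rightarrow> nat \<Rightarrow> idx set" where
  "W_idx m n d k = {(xs, \<sigma>). length xs = d \<and> set xs \<subseteq> {1..m+n} \<and> \<sigma> permutes {1..d+k}}"

definition W_free :: "nat \<Rightarrow> nat \<Rightarrow> nat \<Rightarrow> nat \<Rightarrow> vec set" where
  "W_free m n d k = {f. \<forall>y. y \<notin> W_idx m n d k \<longrightarrow> f y = 0}"

definition rel :: "nat \<Rightarrow> nat \<Rightarrow> idx \<Rightarrow> vec" where
  "rel m i = (\<lambda>(xs, \<sigma>) y.
     (let p = length xs - i - 1 in
       (if is_odd m (xs ! p) \<and> is_odd m (xs ! Suc p) then -1 else 1)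
         * delta (xs[p := xs ! Suc p, Suc p := xs ! p], \<sigma>) y
       - delta (xs, s i \<circ> \<sigma>) y))"

definition W_rel :: "nat \<Rightarrow> nat \<Rightarrow> nat \<Rightarrow> nat \<Rightarrow> vec set" where
  "W_rel m n d k = cspan {rel m i x | i x. x \<in> W_idx m n d k \<and> 1 \<le> i \<and> i < d}"

text \<open>W = W_free / W_rel.  Linear endomorphisms of W are represented by
  linear maps of W_free preserving W_rel; two represent the same
  endomorphism iff they agree modulo W_rel.\<close>
definition W_endo :: "nat \<Rightarrow> nat \<Rightarrow> nat \<Rightarrow> nat \<Rightarrow> (vec \<Rightarrow> vec) \<Rightarrow> bool" where
  "W_endo m n d k T \<longleftrightarrow>
     (\<forall>f\<in>W_free m n d k. T f \<in> W_free m n d k) \<and>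
     (\<forall>f\<in>W_free m n d k. \<forall>g\<in>W_free m n d k. T (\<lambda>y. f y + g y) = (\<lambda>y. T f y + T g y)) \<and>
     (\<forall>f\<in>W_free m n d k. \<forall>c. T (\<lambda>y. c * f y) = (\<lambda>y. c * T f y)) \<and>
     (\<forall>r\<in>W_rel m n d k. T r \<in> W_rel m n d k)"

definition W_eq :: "nat \<Rightarrow> nat \<Rightarrow> nat \<Rightarrow> nat \<Rightarrow> (vec \<Rightarrow> vec) \<Rightarrow> (vec \<Rightarrow> vec) \<Rightarrow> bool" where
  "W_eq m n d k T U \<longleftrightarrow> (\<forall>f\<in>W_free m n d k. (\<lambda>y. T f y - U f y) \<in> W_rel m n d k)"

definition W_commute :: "nat \<Rightarrow> nat \<Rightarrow> nat \<Rightarrow> nat \<Rightarrow> (vec \<Rightarrow> vec) \<Rightarrow> (vec \<Rightarrow> vec) \<Rightarrow> bool" where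
  "W_commute m n d k T U \<longleftrightarrow> W_eq m n d k (T \<circ> U) (U \<circ> T)"

definition R_mult :: "nat \<Rightarrow> nat \<Rightarrow> ((nat \<Rightarrow> nat) \<Rightarrow> complex) \<Rightarrow> vec \<Rightarrow> vec" where
  "R_mult d k c = lin_ext (\<lambda>(xs, \<sigma>) y. \<Sum>\<rho>\<in>{\<rho>. \<rho> permutes {1..d+k}}. c \<rho> * delta (xs, \<sigma> \<circ> \<rho>) y)"

definition A_gens :: "nat \<Rightarrow> nat \<Rightarrow> nat \<Rightarrow> nat \<Rightarrow> (vec \<Rightarrow> vec) set" where
  "A_gens m n d k = {foldr (\<circ>)
        (map (\<lambda>j. L_vec m n (w j)) (rev [1..<d+1]) @ [L_perm \<rho>] @ map (\<lambda>j. L_dual m n (v j)) [1..<d+1])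
        id
      | w \<rho> v. \<rho> permutes {1..d+k}}"

definition A_alg :: "nat \<Rightarrow> nat \<Rightarrow> nat \<Rightarrow> nat \<Rightarrow> (vec \<Rightarrow> vec) set" where
  "A_alg m n d k = cspan_op (A_gens m n d k)"

end

theory Submission
  imports Defs "HOL-Library.Function_Algebras"
begin

text \<open>
  The operators \<open>L(v)\<close>, \<open>L(\<sigma>)\<close>, \<open>L(v\<^sup>*)\<close> commute with right multiplication and preserve the
  relations of the tensor product over \<open>\<complex>\<frakS>\<^sub>d\<close>; a generator of the algebra ends with
  \<open>d\<close> contractions, landing in degree \<open>0\<close> where there are no relations. This gives the two
  easy inclusions.

  The key identity is that the number operator \<open>\<Sum>\<^sub>a L(e\<^sub>a) L(e\<^sub>a\<^sup>*)\<close> acts on tensors of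
  degree \<open>L\<close> as multiplication by \<open>L\<close> modulo relations, since each of its terms moves one
  factor to the front. Hence \<open>\<Sum>\<^sub>x L(e\<^sub>x) L(e\<^sub>x\<^sup>*) = d!\<close> on \<open>W\<close>, summed over words \<open>x\<close> of
  length \<open>d\<close>, and an equivariant \<open>T\<close> agrees with
  \<open>(1/d!) \<Sum> T(e\<^sub>x \<otimes> 1)\<^sub>(\<^sub>u\<^sub>,\<^sub>\<sigma>\<^sub>) L(e\<^sub>u) L(\<sigma>) L(e\<^sub>x\<^sup>*)\<close>.

  For the double commutant, project \<open>W\<^sup>I\<close> (\<open>I\<close> the basis tensors) onto the submodule generated
  by the basis family \<open>(e\<^sub>i)\<^sub>i\<close> and average the projection over \<open>\<frakS>\<^sub>d\<^sub>+\<^sub>k\<close>. Its matrix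
  entries commute with \<open>\<complex>\<frakS>\<^sub>d\<^sub>+\<^sub>k\<close>, so they lie in the algebra and commute with \<open>T\<close>;
  applying \<open>T\<close> to the decomposition of \<open>e\<^sub>i\<close> along the projection shows that
  \<open>T(e\<^sub>i) = e\<^sub>i . b\<close> for the single element \<open>b\<close> describing the projected family \<open>(T e\<^sub>j)\<^sub>j\<close>.
\<close>

section \<open>Finitely supported vectors and linear operators\<close>

definition fin_supp :: "vec \<Rightarrow> bool" where "fin_supp f \<longleftrightarrow> finite {y. f y \<noteq> 0}"

text \<open>Linearity is only required on finitely supported vectors, where \<open>lin_ext\<close> is meaningful.\<close>

definition linop :: "(vec \<Rightarrow> vec) \<Rightarrow> bool" where
 "linop T \<longleftrightarrow> (\<forall>f. fin_supp f \<longrightarrow> fin_supp (T f))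
   \<and> (\<forall>f g. fin_supp f \<longrightarrow> fin_supp g \<longrightarrow> T (\<lambda>y. f y + g y) = (\<lambda>y. T f y + T g y))
   \<and> (\<forall>f c. fin_supp f \<longrightarrow> T (\<lambda>y. c * f y) = (\<lambda>y. c * T f y))"

lemma fin_supp_delta[simp]: "fin_supp (delta x)"
  unfolding fin_supp_def delta_def by (rule finite_subset[of _ "{x}"]) auto

lemma fin_supp_zero[simp]: "fin_supp (\<lambda>y. 0)"
  unfolding fin_supp_def by simp

lemma fin_supp_add[simp]: "fin_supp f \<Longrightarrow> fin_supp g \<Longrightarrow> fin_supp (\<lambda>y. f y + g y)"
  unfolding fin_supp_def by (rule finite_subset[of _ "{y. f y \<noteq> 0} \<union> {y. g y \<noteq> 0}"]) auto

lemma fin_supp_diff[simp]: "fin_supp f \<Longrightarrow> fin_supp g \<Longrightarrow> fin_supp (\<lambda>y. f y - g y)"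
  unfolding fin_supp_def by (rule finite_subset[of _ "{y. f y \<noteq> 0} \<union> {y. g y \<noteq> 0}"]) auto

lemma fin_supp_neg[simp]: "fin_supp f \<Longrightarrow> fin_supp (\<lambda>y. - f y)"
  unfolding fin_supp_def by simp

lemma fin_supp_scale[simp]: "fin_supp f \<Longrightarrow> fin_supp (\<lambda>y. c * f y)"
  unfolding fin_supp_def by (rule finite_subset[of _ "{y. f y \<noteq> 0}"]) auto

lemma fin_supp_sum[simp]: "finite S \<Longrightarrow> (\<And>i. i \<in> S \<Longrightarrow> fin_supp (h i)) \<Longrightarrow> fin_supp (\<lambda>y. \<Sum>i\<in>S. h i y)"
proof (induction S rule: finite_induct)
  case empty then show ?case by simp
next
  case (insert x F)
  have "fin_supp (\<lambda>y. h x y + (\<Sum>i\<in>F. h i y))"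
    using insert by (intro fin_supp_add) auto
  then show ?case using insert by simp
qed

lemma fin_supp_subset: "finite S \<Longrightarrow> (\<And>y. y \<notin> S \<Longrightarrow> f y = 0) \<Longrightarrow> fin_supp f"
  unfolding fin_supp_def by (rule finite_subset[of _ S]) auto

lemma linop_fin_supp: "linop T \<Longrightarrow> fin_supp f \<Longrightarrow> fin_supp (T f)" unfolding linop_def by blast

lemma linop_add: "linop T \<Longrightarrow> fin_supp f \<Longrightarrow> fin_supp g \<Longrightarrow> T (\<lambda>y. f y + g y) = (\<lambda>y. T f y + T g y)"
  unfolding linop_def by blast

lemma linop_scale: "linop T \<Longrightarrow> fin_supp f \<Longrightarrow> T (\<lambda>y. c * f y) = (\<lambda>y. c * T f y)"
  unfolding linop_def by blast

lemma linop_zero: assumes "linop T" shows "T (\<lambda>y. 0) = (\<lambda>y. 0)"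
  using linop_scale[OF assms fin_supp_zero, of 0] by simp

lemma linop_sum:
  assumes "linop T" "finite S" "\<And>i. i \<in> S \<Longrightarrow> fin_supp (h i)"
  shows "T (\<lambda>y. \<Sum>i\<in>S. c i * h i y) = (\<lambda>y. \<Sum>i\<in>S. c i * T (h i) y)"
  using assms(2,3)
proof (induction S rule: finite_induct)
  case empty then show ?case using linop_zero[OF assms(1)] by simp
next
  case (insert x F)
  have "T (\<lambda>y. \<Sum>i\<in>insert x F. c i * h i y) = T (\<lambda>y. c x * h x y + (\<Sum>i\<in>F. c i * h i y))"
    using insert by simp
  also have "\<dots> = (\<lambda>y. T (\<lambda>y. c x * h x y) y + T (\<lambda>y. \<Sum>i\<in>F. c i * h i y) y)"
    using insert by (intro linop_add[OF assms(1)]) auto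
  also have "\<dots> = (\<lambda>y. \<Sum>i\<in>insert x F. c i * T (h i) y)"
    using insert linop_scale[OF assms(1), of "h x" "c x"] by simp
  finally show ?case .
qed

lemma linop_sum':
  assumes "linop T" "finite S" "\<And>i. i \<in> S \<Longrightarrow> fin_supp (h i)"
  shows "T (\<lambda>y. \<Sum>i\<in>S. h i y) = (\<lambda>y. \<Sum>i\<in>S. T (h i) y)"
  using linop_sum[OF assms, where c="\<lambda>_. 1"] by simp

lemma linop_diff:
  assumes "linop T" "fin_supp f" "fin_supp g"
  shows "T (\<lambda>y. f y - g y) = (\<lambda>y. T f y - T g y)"
proof -
  have e: "(\<lambda>y. f y - g y) = (\<lambda>y. f y + (\<lambda>y. (-1) * g y) y)" by simp
  have "T (\<lambda>y. f y + (\<lambda>y. (-1) * g y) y) = (\<lambda>y. T f y + T (\<lambda>y. (-1) * g y) y)"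
    using assms by (intro linop_add) auto
  also have "T (\<lambda>y. (-1) * g y) = (\<lambda>y. (-1) * T g y)" using assms by (intro linop_scale) auto
  finally show ?thesis unfolding e by simp
qed

lemma fin_supp_decomp:
  assumes "finite S" "\<And>y. y \<notin> S \<Longrightarrow> f y = 0"
  shows "f = (\<lambda>y. \<Sum>x\<in>S. f x * delta x y)"
proof
  fix y
  have "(\<Sum>x\<in>S. f x * delta x y) = (\<Sum>x\<in>S. if x = y then f y else 0)"
    by (rule sum.cong) (auto simp: delta_def)
  also have "\<dots> = f y" using assms by (auto simp: sum.delta')
  finally show "f y = (\<Sum>x\<in>S. f x * delta x y)" by simp
qed

lemma linop_ext:
  assumes "linop T" "linop U" "finite S" "\<And>y. y \<notin> S \<Longrightarrow> f y = 0"
    "\<And>x. x \<in> S \<Longrightarrow> T (delta x) = U (delta x)"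
  shows "T f = U f"
proof -
  have e: "f = (\<lambda>y. \<Sum>x\<in>S. f x * delta x y)" by (rule fin_supp_decomp[OF assms(3,4)])
  have "T f = T (\<lambda>y. \<Sum>x\<in>S. f x * delta x y)" by (rule arg_cong[OF e])
  also have "\<dots> = (\<lambda>y. \<Sum>x\<in>S. f x * T (delta x) y)" using linop_sum[OF assms(1,3)] by simp
  also have "\<dots> = (\<lambda>y. \<Sum>x\<in>S. f x * U (delta x) y)" using assms(5) by simp
  also have "\<dots> = U (\<lambda>y. \<Sum>x\<in>S. f x * delta x y)" using linop_sum[OF assms(2,3)] by simp
  also have "\<dots> = U f" by (rule arg_cong[OF e[symmetric]])
  finally show ?thesis .
qed

lemma linop_ext':
  assumes "linop T" "linop U" "fin_supp f" "\<And>x. T (delta x) = U (delta x)"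
  shows "T f = U f"
proof -
  have "finite {y. f y \<noteq> 0}" using assms(3) unfolding fin_supp_def .
  then show ?thesis by (rule linop_ext[OF assms(1,2)]) (auto simp: assms(4))
qed

lemma linop_id[simp]: "linop id" unfolding linop_def by simp

lemma linop_id'[simp]: "linop (\<lambda>f. f)" unfolding linop_def by simp

lemma linop_comp[intro]: "linop T \<Longrightarrow> linop U \<Longrightarrow> linop (T \<circ> U)"
  unfolding linop_def by auto

lemma linop_comb:
  assumes "finite S" "\<And>j. j \<in> S \<Longrightarrow> linop (T j)"
  shows "linop (\<lambda>f y. \<Sum>j\<in>S. c j * T j f y)"
  unfolding linop_def
proof (intro conjI allI impI)
  fix f assume "fin_supp f" then show "fin_supp (\<lambda>y. \<Sum>j\<in>S. c j * T j f y)"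
    using assms by (intro fin_supp_sum fin_supp_scale) (auto dest: linop_fin_supp)
next
  fix f g assume "fin_supp f" "fin_supp g"
  then show "(\<lambda>y. \<Sum>j\<in>S. c j * T j (\<lambda>y. f y + g y) y) =
    (\<lambda>y. (\<Sum>j\<in>S. c j * T j f y) + (\<Sum>j\<in>S. c j * T j g y))"
    using assms by (auto simp: linop_add ring_distribs sum.distrib)
next
  fix f c' assume "fin_supp f"
  then show "(\<lambda>y. \<Sum>j\<in>S. c j * T j (\<lambda>y. c' * f y) y) = (\<lambda>y. c' * (\<Sum>j\<in>S. c j * T j f y))"
    using assms by (auto simp: linop_scale sum_distrib_left mult_ac)
qed

lemma lin_ext_eq:
  assumes "finite S" "\<And>y. y \<notin> S \<Longrightarrow> f y = 0"
  shows "lin_ext g f = (\<lambda>y. \<Sum>x\<in>S. f x * g x y)"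
proof
  fix y
  have "{x. f x \<noteq> 0} \<subseteq> S" using assms by auto
  then show "lin_ext g f y = (\<Sum>x\<in>S. f x * g x y)"
    unfolding lin_ext_def using assms by (intro sum.mono_neutral_left) auto
qed

lemma lin_ext_eq':
  assumes "fin_supp f"
  shows "lin_ext g f = (\<lambda>y. \<Sum>x\<in>{x. f x \<noteq> 0}. f x * g x y)"
  using assms unfolding lin_ext_def by simp

lemma lin_ext_delta[simp]: "lin_ext g (delta x) = g x"
proof -
  have "lin_ext g (delta x) = (\<lambda>y. \<Sum>x'\<in>{x}. delta x x' * g x' y)"
    by (rule lin_ext_eq) (auto simp: delta_def)
  then show ?thesis by (simp add: delta_def)
qed

lemma linop_lin_ext:
  assumes "\<And>x. fin_supp (g x)"
  shows "linop (lin_ext g)"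
  unfolding linop_def
proof (intro conjI allI impI)
  fix f assume f: "fin_supp f"
  then show "fin_supp (lin_ext g f)"
    using assms by (auto simp: lin_ext_eq' fin_supp_def[of f])
next
  fix f h assume f: "fin_supp f" and h: "fin_supp h"
  let ?S = "{x. f x \<noteq> 0} \<union> {x. h x \<noteq> 0}"
  have fin: "finite ?S" using f h by (auto simp: fin_supp_def)
  have "lin_ext g (\<lambda>y. f y + h y) = (\<lambda>y. \<Sum>x\<in>?S. (f x + h x) * g x y)"
    by (rule lin_ext_eq[OF fin]) auto
  moreover have "lin_ext g f = (\<lambda>y. \<Sum>x\<in>?S. f x * g x y)"
    by (rule lin_ext_eq[OF fin]) auto
  moreover have "lin_ext g h = (\<lambda>y. \<Sum>x\<in>?S. h x * g x y)"
    by (rule lin_ext_eq[OF fin]) auto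
  ultimately show "lin_ext g (\<lambda>y. f y + h y) = (\<lambda>y. lin_ext g f y + lin_ext g h y)"
    by (simp add: ring_distribs sum.distrib)
next
  fix f c assume f: "fin_supp f"
  let ?S = "{x. f x \<noteq> 0}"
  have fin: "finite ?S" using f by (auto simp: fin_supp_def)
  have "lin_ext g (\<lambda>y. c * f y) = (\<lambda>y. \<Sum>x\<in>?S. (c * f x) * g x y)"
    by (rule lin_ext_eq[OF fin]) auto
  moreover have "lin_ext g f = (\<lambda>y. \<Sum>x\<in>?S. f x * g x y)"
    by (rule lin_ext_eq[OF fin]) auto
  ultimately show "lin_ext g (\<lambda>y. c * f y) = (\<lambda>y. c * lin_ext g f y)"
    by (simp add: sum_distrib_left mult_ac)
qed

lemma fin_supp_if[simp]: "fin_supp g \<Longrightarrow> fin_supp (\<lambda>y. if P then g y else 0)"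
  by (cases P) auto

lemma sum_delta_weight: "finite A \<Longrightarrow> a \<in> A \<Longrightarrow> (\<lambda>y. \<Sum>b\<in>A. (if b = a then 1 else 0) * (g :: _ \<Rightarrow> _ \<Rightarrow> complex) b y) = g a"
proof
  fix y
  assume a: "finite A" "a \<in> A"
  have "(\<Sum>b\<in>A. (if b = a then 1 else 0) * g b y) = (\<Sum>b\<in>A. if b = a then g b y else 0)"
    by (rule sum.cong) auto
  then show "(\<Sum>b\<in>A. (if b = a then 1 else 0) * g b y) = g a y" using a by (simp add: sum.delta)
qed

lemma cspan_zero[simp]: "(\<lambda>y. 0) \<in> cspan B"
  unfolding cspan_def by (rule CollectI, rule exI[of _ "{}"]) auto

lemma cspan_base: "b \<in> B \<Longrightarrow> b \<in> cspan B"
  unfolding cspan_def by (rule CollectI, rule exI[of _ "{b}"], rule exI[of _ "\<lambda>_. 1"]) auto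

lemma cspan_add:
  assumes "f \<in> cspan B" "g \<in> cspan B" shows "(\<lambda>y. f y + g y) \<in> cspan B"
proof -
  obtain S1 c1 where 1: "finite S1" "S1 \<subseteq> B" "f = (\<lambda>y. \<Sum>b\<in>S1. c1 b * b y)"
    using assms(1) unfolding cspan_def by blast
  obtain S2 c2 where 2: "finite S2" "S2 \<subseteq> B" "g = (\<lambda>y. \<Sum>b\<in>S2. c2 b * b y)"
    using assms(2) unfolding cspan_def by blast
  let ?c = "\<lambda>b. (if b \<in> S1 then c1 b else 0) + (if b \<in> S2 then c2 b else 0)"
  have "(\<lambda>y. f y + g y) = (\<lambda>y. \<Sum>b\<in>S1 \<union> S2. ?c b * b y)"
  proof
    fix y
    have a: "(\<Sum>b\<in>S1 \<union> S2. (if b \<in> S1 then c1 b else 0) * b y) = (\<Sum>b\<in>S1. c1 b * b y)"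
      using 1 2 by (intro sum.mono_neutral_cong_right) auto
    have b: "(\<Sum>b\<in>S1 \<union> S2. (if b \<in> S2 then c2 b else 0) * b y) = (\<Sum>b\<in>S2. c2 b * b y)"
      using 1 2 by (intro sum.mono_neutral_cong_right) auto
    show "f y + g y = (\<Sum>b\<in>S1 \<union> S2. ?c b * b y)"
      using a b 1 2 by (simp add: ring_distribs sum.distrib)
  qed
  then show ?thesis unfolding cspan_def using 1(1,2) 2(1,2)
    by (intro CollectI exI[of _ "S1 \<union> S2"] exI[of _ ?c] conjI) auto
qed

lemma cspan_scale:
  assumes "f \<in> cspan B" shows "(\<lambda>y. c * f y) \<in> cspan B"
proof -
  obtain S1 c1 where 1: "finite S1" "S1 \<subseteq> B" "f = (\<lambda>y. \<Sum>b\<in>S1. c1 b * b y)"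
    using assms(1) unfolding cspan_def by blast
  have "(\<lambda>y. c * f y) = (\<lambda>y. \<Sum>b\<in>S1. (c * c1 b) * b y)"
    using 1 by (auto simp: sum_distrib_left mult_ac)
  then show ?thesis unfolding cspan_def using 1(1,2)
    by (intro CollectI exI[of _ "S1"] exI[of _ "\<lambda>b. c * c1 b"] conjI) auto
qed

lemma cspan_fin_supp:
  assumes "\<And>b. b \<in> B \<Longrightarrow> fin_supp b" "f \<in> cspan B" shows "fin_supp f"
proof -
  obtain S1 c1 where 1: "finite S1" "S1 \<subseteq> B" "f = (\<lambda>y. \<Sum>b\<in>S1. c1 b * b y)"
    using assms(2) unfolding cspan_def by blast
  then show ?thesis using assms(1) by (auto intro!: fin_supp_sum fin_supp_scale)
qed

lemma cspan_op_family:
  assumes "finite I" "\<And>i. i \<in> I \<Longrightarrow> G i \<in> Gs"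
  shows "(\<lambda>f y. \<Sum>i\<in>I. a i * G i f y) \<in> cspan_op Gs"
proof -
  define c where "c g = (\<Sum>i\<in>{i\<in>I. G i = g}. a i)" for g
  have "(\<lambda>f y. \<Sum>i\<in>I. a i * G i f y) = (\<lambda>f y. \<Sum>g\<in>G ` I. c g * g f y)"
  proof (intro ext)
    fix f y
    have "(\<Sum>i\<in>I. a i * G i f y) = (\<Sum>g\<in>G ` I. \<Sum>i\<in>{i\<in>I. G i = g}. a i * G i f y)"
      by (rule sum.image_gen[OF assms(1)])
    also have "\<dots> = (\<Sum>g\<in>G ` I. c g * g f y)"
      unfolding c_def sum_distrib_right by (intro sum.cong refl) auto
    finally show "(\<Sum>i\<in>I. a i * G i f y) = (\<Sum>g\<in>G ` I. c g * g f y)" .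
  qed
  then show ?thesis unfolding cspan_op_def using assms by blast
qed

definition csubspace :: "vec set \<Rightarrow> bool" where
  "csubspace C \<longleftrightarrow> (\<lambda>y. 0) \<in> C \<and> (\<forall>f g. f \<in> C \<longrightarrow> g \<in> C \<longrightarrow> (\<lambda>y. f y + g y) \<in> C)
     \<and> (\<forall>f c. f \<in> C \<longrightarrow> (\<lambda>y. c * f y) \<in> C)"

lemma csubspace_cspan: "csubspace (cspan B)"
  unfolding csubspace_def by (auto intro: cspan_add cspan_scale)

lemma csubspace_sum:
  assumes "csubspace C" "finite S" "\<And>i. i \<in> S \<Longrightarrow> h i \<in> C"
  shows "(\<lambda>y. \<Sum>i\<in>S. c i * h i y) \<in> C"
  using assms(2,3)
proof (induction S rule: finite_induct)
  case empty then show ?case using assms(1) unfolding csubspace_def by simp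
next
  case (insert x F)
  have "(\<lambda>y. c x * h x y + (\<Sum>i\<in>F. c i * h i y)) \<in> C"
    using insert assms(1) unfolding csubspace_def by auto
  then show ?case using insert by simp
qed

lemma csubspace_sum':
  assumes "csubspace C" "finite S" "\<And>i. i \<in> S \<Longrightarrow> h i \<in> C"
  shows "(\<lambda>y. \<Sum>i\<in>S. h i y) \<in> C"
  using csubspace_sum[OF assms, where c="\<lambda>_. 1"] by simp

lemma csubspace_add: "csubspace C \<Longrightarrow> f \<in> C \<Longrightarrow> g \<in> C \<Longrightarrow> (\<lambda>y. f y + g y) \<in> C"
  unfolding csubspace_def by blast

lemma csubspace_scale: "csubspace C \<Longrightarrow> f \<in> C \<Longrightarrow> (\<lambda>y. c * f y) \<in> C"
  unfolding csubspace_def by blast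

lemma csubspace_zero: "csubspace C \<Longrightarrow> (\<lambda>y. 0) \<in> C"
  unfolding csubspace_def by blast

lemma csubspace_diff: "csubspace C \<Longrightarrow> f \<in> C \<Longrightarrow> g \<in> C \<Longrightarrow> (\<lambda>y. f y - g y) \<in> C"
  using csubspace_add[of C f "\<lambda>y. (-1) * g y"] csubspace_scale[of C g "-1"] by simp

lemma linop_minus: "linop T \<Longrightarrow> linop U \<Longrightarrow> linop (\<lambda>f y. T f y - U f y)"
  unfolding linop_def by (auto simp: algebra_simps)

lemma linop_smult: "linop (\<lambda>f y. c * f y)"
  unfolding linop_def by (auto simp: algebra_simps)

section \<open>Simple transpositions and cycles\<close>

lemma s_s[simp]: "s i \<circ> s i = id"
  by (auto simp: fun_eq_iff s_def)

lemma s_permutes: "1 \<le> i \<Longrightarrow> Suc i \<le> N \<Longrightarrow> s i permutes {1..N}"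
proof -
  assume a: "1 \<le> i" "Suc i \<le> N"
  have "s i = Transposition.transpose i (Suc i)"
    by (auto simp: fun_eq_iff s_def Transposition.transpose_def)
  then show ?thesis using a by (simp add: permutes_swap_id)
qed

lemma cyc_formula:
  "k \<le> L \<Longrightarrow> cyc k L j = (if j = k then L else if k < j \<and> j \<le> L then j - 1 else j)"
proof (induction L arbitrary: j)
  case 0 then show ?case by simp
next
  case (Suc L)
  show ?case
  proof (cases "k \<le> L")
    case True
    then show ?thesis using Suc.IH[OF True] by (auto simp: s_def)
  next
    case False
    then have "k = Suc L" using Suc.prems by simp
    then show ?thesis by simp
  qed
qed

lemma cyc_triv: "L \<le> k \<Longrightarrow> cyc k L = id"
  by (induction L) auto

lemma cyc_permutes: "1 \<le> k \<Longrightarrow> L \<le> N \<Longrightarrow> cyc k L permutes {1..N}"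
proof (induction L)
  case 0 then show ?case by (simp add: permutes_id[unfolded id_def])
next
  case (Suc L)
  show ?case
  proof (cases "k \<le> L")
    case True
    then have "s L \<circ> cyc k L permutes {1..N}" using Suc by (intro permutes_compose s_permutes) auto
    then show ?thesis using True by (simp add: comp_def)
  next
    case False then show ?thesis by (simp add: permutes_id[unfolded id_def])
  qed
qed

lemma cyc_step: "k < L \<Longrightarrow> cyc k L = cyc (Suc k) L \<circ> s k"
  by (auto simp: fun_eq_iff cyc_formula s_def)

lemma cyc_s_low: "k < i \<Longrightarrow> i < L \<Longrightarrow> cyc k L \<circ> s i = s (i - 1) \<circ> cyc k L"
  by (auto simp: fun_eq_iff cyc_formula s_def)

lemma cyc_s_high: "Suc i < k \<Longrightarrow> k \<le> L \<Longrightarrow> cyc k L \<circ> s i = s i \<circ> cyc k L"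
  by (auto simp: fun_eq_iff cyc_formula s_def)

section \<open>Basis tensors and relations\<close>

definition perms :: "nat \<Rightarrow> (nat \<Rightarrow> nat) set" where "perms N = {\<rho>. \<rho> permutes {1..N}}"

definition basis_idx :: "nat \<Rightarrow> nat \<Rightarrow> nat \<Rightarrow> nat \<Rightarrow> idx set" where
  "basis_idx m n N L = {(xs, \<sigma>). length xs = L \<and> set xs \<subseteq> {1..m+n} \<and> \<sigma> permutes {1..N}}"

definition free_tensors :: "nat \<Rightarrow> nat \<Rightarrow> nat \<Rightarrow> nat \<Rightarrow> vec set" where
  "free_tensors m n N L = {f. \<forall>y. y \<notin> basis_idx m n N L \<longrightarrow> f y = 0}"

definition rel_span :: "nat \<Rightarrow> nat \<Rightarrow> nat \<Rightarrow> nat \<Rightarrow> vec set" where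
  "rel_span m n N L = cspan {rel m i x | i x. x \<in> basis_idx m n N L \<and> 1 \<le> i \<and> i < L}"

lemma W_idx_basis_idx: "W_idx m n d k = basis_idx m n (d+k) d"
  unfolding W_idx_def basis_idx_def by simp

lemma W_free_free_tensors: "W_free m n d k = free_tensors m n (d+k) d"
  unfolding W_free_def free_tensors_def W_idx_basis_idx by simp

lemma W_rel_rel_span: "W_rel m n d k = rel_span m n (d+k) d"
  unfolding W_rel_def rel_span_def W_idx_basis_idx by simp

lemma finite_perms: "finite (perms N)"
  unfolding perms_def by (rule finite_permutations) simp

lemma finite_basis_idx: "finite (basis_idx m n N L)"
proof -
  have "basis_idx m n N L = {xs. set xs \<subseteq> {1..m+n} \<and> length xs = L} \<times> {\<sigma>. \<sigma> permutes {1..N}}"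
    unfolding basis_idx_def by auto
  moreover have "finite {xs. set xs \<subseteq> {1..m+n} \<and> length xs = L}"
    by (rule finite_lists_length_eq) simp
  moreover have "finite {\<sigma>. \<sigma> permutes {1..N}}" by (rule finite_permutations) simp
  ultimately show ?thesis by simp
qed

lemma free_tensors_fin_supp: "f \<in> free_tensors m n N L \<Longrightarrow> fin_supp f"
  unfolding free_tensors_def by (rule fin_supp_subset[OF finite_basis_idx]) auto

lemma free_tensors_delta: "x \<in> basis_idx m n N L \<Longrightarrow> delta x \<in> free_tensors m n N L"
  unfolding free_tensors_def delta_def by auto

lemma free_tensors_zero[simp]: "(\<lambda>y. 0) \<in> free_tensors m n N L" unfolding free_tensors_def by simp

lemma free_tensors_add: "f \<in> free_tensors m n N L \<Longrightarrow> g \<in> free_tensors m n N L \<Longrightarrow> (\<lambda>y. f y + g y) \<in> free_tensors m n N L"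
  unfolding free_tensors_def by simp

lemma free_tensors_diff: "f \<in> free_tensors m n N L \<Longrightarrow> g \<in> free_tensors m n N L \<Longrightarrow> (\<lambda>y. f y - g y) \<in> free_tensors m n N L"
  unfolding free_tensors_def by simp

lemma free_tensors_scale: "f \<in> free_tensors m n N L \<Longrightarrow> (\<lambda>y. c * f y) \<in> free_tensors m n N L"
  unfolding free_tensors_def by simp

lemma free_tensors_decomp: "f \<in> free_tensors m n N L \<Longrightarrow> f = (\<lambda>y. \<Sum>x\<in>basis_idx m n N L. f x * delta x y)"
  by (rule fin_supp_decomp[OF finite_basis_idx]) (auto simp: free_tensors_def)

lemma rel_fin_supp: "fin_supp (rel m i x)"
proof -
  obtain xs \<sigma> where x: "x = (xs, \<sigma>)" by (cases x)
  show ?thesis unfolding x rel_def Let_def prod.case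
    by (intro fin_supp_diff fin_supp_scale) simp_all
qed

lemma rel_eq: "rel m i (xs, \<sigma>) = (\<lambda>y. (if is_odd m (xs ! (length xs - i - 1)) \<and> is_odd m (xs ! Suc (length xs - i - 1)) then -1 else 1)
         * delta (xs[length xs - i - 1 := xs ! Suc (length xs - i - 1), Suc (length xs - i - 1) := xs ! (length xs - i - 1)], \<sigma>) y
       - delta (xs, s i \<circ> \<sigma>) y)"
  unfolding rel_def Let_def by simp

lemma rel_span_fin_supp: "f \<in> rel_span m n N L \<Longrightarrow> fin_supp f"
  unfolding rel_span_def by (rule cspan_fin_supp) (auto simp: rel_fin_supp)

lemma csubspace_free_tensors: "csubspace (free_tensors m n N L)"
  unfolding csubspace_def by (auto intro: free_tensors_add free_tensors_scale)

lemma csubspace_rel_span: "csubspace (rel_span m n N L)"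
  unfolding rel_span_def by (rule csubspace_cspan)

lemma linop_free_tensors_into:
  assumes "linop T" "csubspace C" "f \<in> free_tensors m n N L" "\<And>x. x \<in> basis_idx m n N L \<Longrightarrow> T (delta x) \<in> C"
  shows "T f \<in> C"
proof -
  have "T f = T (\<lambda>y. \<Sum>x\<in>basis_idx m n N L. f x * delta x y)"
    by (rule arg_cong[OF free_tensors_decomp[OF assms(3)]])
  also have "\<dots> = (\<lambda>y. \<Sum>x\<in>basis_idx m n N L. f x * T (delta x) y)"
    by (rule linop_sum[OF assms(1) finite_basis_idx]) simp
  also have "\<dots> \<in> C" by (rule csubspace_sum[OF assms(2) finite_basis_idx assms(4)])
  finally show ?thesis .
qed

lemma rel_in_rel_span: "x \<in> basis_idx m n N L \<Longrightarrow> 1 \<le> i \<Longrightarrow> i < L \<Longrightarrow> rel m i x \<in> rel_span m n N L"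
  unfolding rel_span_def by (rule cspan_base) blast

lemma linop_rel_span_into:
  assumes "linop T" "f \<in> rel_span m n N L"
    "\<And>i x. x \<in> basis_idx m n N L \<Longrightarrow> 1 \<le> i \<Longrightarrow> i < L \<Longrightarrow> T (rel m i x) \<in> C" "csubspace C"
  shows "T f \<in> C"
proof -
  obtain S c where S: "finite S" "S \<subseteq> {rel m i x | i x. x \<in> basis_idx m n N L \<and> 1 \<le> i \<and> i < L}"
    "f = (\<lambda>y. \<Sum>b\<in>S. c b * b y)"
    using assms(2) unfolding rel_span_def cspan_def by blast
  have fs: "\<And>b. b \<in> S \<Longrightarrow> fin_supp b" using S(2) rel_fin_supp by blast
  have "T f = (\<lambda>y. \<Sum>b\<in>S. c b * T b y)" unfolding S(3) by (rule linop_sum[OF assms(1) S(1) fs])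
  also have "\<dots> \<in> C"
  proof (rule csubspace_sum[OF assms(4) S(1)])
    fix b assume "b \<in> S"
    then obtain i x where "b = rel m i x" "x \<in> basis_idx m n N L" "1 \<le> i" "i < L" using S(2) by blast
    then show "T b \<in> C" using assms(3) by simp
  qed
  finally show ?thesis .
qed

lemma rel_free_tensors:
  assumes "x \<in> basis_idx m n N L" "1 \<le> i" "i < L" "L \<le> N"
  shows "rel m i x \<in> free_tensors m n N L"
proof -
  obtain xs \<sigma> where xx: "x = (xs, \<sigma>)" by (cases x)
  have si: "s i permutes {1..N}" using assms by (intro s_permutes) auto
  let ?p = "length xs - i - 1"
  have "set (xs[?p := xs ! Suc ?p, Suc ?p := xs ! ?p]) \<subseteq> {1..m+n}"
    using assms xx by (auto simp: basis_idx_def dest!: set_update_subset_insert[THEN subsetD] intro: nth_mem)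
  then have "delta (xs[?p := xs ! Suc ?p, Suc ?p := xs ! ?p], \<sigma>) \<in> free_tensors m n N L"
    using assms xx by (intro free_tensors_delta) (auto simp: basis_idx_def)
  moreover have "delta (xs, s i \<circ> \<sigma>) \<in> free_tensors m n N L"
    using assms xx si by (intro free_tensors_delta) (auto simp: basis_idx_def intro: permutes_compose)
  ultimately show ?thesis unfolding xx rel_eq by (intro free_tensors_diff free_tensors_scale)
qed

lemma rel_span_free_tensors: assumes "r \<in> rel_span m n N L" "L \<le> N" shows "r \<in> free_tensors m n N L"
  using linop_rel_span_into[OF linop_id' assms(1) _ csubspace_free_tensors] rel_free_tensors assms(2) by blast

lemma rel_span_degree0: "f \<in> rel_span m n N 0 \<Longrightarrow> f = (\<lambda>y. 0)"
  unfolding rel_span_def cspan_def by auto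

section \<open>Right translations\<close>

definition rtrans :: "(nat \<Rightarrow> nat) \<Rightarrow> vec \<Rightarrow> vec" where
  "rtrans \<rho> f = (\<lambda>(xs, \<sigma>). f (xs, \<sigma> \<circ> inv \<rho>))"

lemma rtrans_apply: "rtrans \<rho> f (xs, \<sigma>) = f (xs, \<sigma> \<circ> inv \<rho>)" unfolding rtrans_def by simp

lemma bij_comp_inv_eq: "bij \<rho> \<Longrightarrow> (\<sigma> \<circ> inv \<rho> = \<alpha>) \<longleftrightarrow> (\<sigma> = \<alpha> \<circ> \<rho>)"
  by (metis bij_is_surj comp_assoc comp_id surj_iff bij_is_inj inv_o_cancel)

lemma rtrans_delta: assumes "bij \<rho>" shows "rtrans \<rho> (delta (xs, \<alpha>)) = delta (xs, \<alpha> \<circ> \<rho>)"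
proof
  fix y :: idx obtain ys \<sigma> where y: "y = (ys, \<sigma>)" by (cases y)
  show "rtrans \<rho> (delta (xs, \<alpha>)) y = delta (xs, \<alpha> \<circ> \<rho>) y"
    unfolding y rtrans_apply delta_def using bij_comp_inv_eq[OF assms, of \<sigma> \<alpha>] by auto
qed

lemma rtrans_add: "rtrans \<rho> (\<lambda>y. f y + g y) = (\<lambda>y. rtrans \<rho> f y + rtrans \<rho> g y)"
  unfolding rtrans_def by auto

lemma rtrans_scale: "rtrans \<rho> (\<lambda>y. c * f y) = (\<lambda>y. c * rtrans \<rho> f y)"
  unfolding rtrans_def by auto

lemma rtrans_diff: "rtrans \<rho> (\<lambda>y. f y - g y) = (\<lambda>y. rtrans \<rho> f y - rtrans \<rho> g y)"
  unfolding rtrans_def by auto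

lemma rtrans_sum: "rtrans \<rho> (\<lambda>y. \<Sum>i\<in>S. h i y) = (\<lambda>y. \<Sum>i\<in>S. rtrans \<rho> (h i) y)"
  unfolding rtrans_def by auto

lemma rtrans_zero[simp]: "rtrans \<rho> (\<lambda>y. 0) = (\<lambda>y. 0)"
  unfolding rtrans_def by auto

lemma rtrans_id[simp]: "rtrans id f = f"
  unfolding rtrans_def by (auto simp: fun_eq_iff)

lemma rtrans_rtrans: "bij \<rho> \<Longrightarrow> bij \<tau> \<Longrightarrow> rtrans \<rho> (rtrans \<tau> f) = rtrans (\<tau> \<circ> \<rho>) f"
  unfolding rtrans_def by (auto simp: fun_eq_iff o_inv_distrib comp_assoc)

lemma fin_supp_rtrans: assumes "bij \<rho>" "fin_supp f" shows "fin_supp (rtrans \<rho> f)"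
proof -
  have "{y. rtrans \<rho> f y \<noteq> 0} \<subseteq> (\<lambda>(xs, \<sigma>). (xs, \<sigma> \<circ> \<rho>)) ` {y. f y \<noteq> 0}"
  proof
    fix y assume "y \<in> {y. rtrans \<rho> f y \<noteq> 0}"
    then obtain xs \<sigma> where y: "y = (xs, \<sigma>)" "f (xs, \<sigma> \<circ> inv \<rho>) \<noteq> 0"
      by (cases y) (auto simp: rtrans_def)
    have "\<sigma> = (\<sigma> \<circ> inv \<rho>) \<circ> \<rho>" using bij_comp_inv_eq[OF assms(1)] by blast
    then show "y \<in> (\<lambda>(xs, \<sigma>). (xs, \<sigma> \<circ> \<rho>)) ` {y. f y \<noteq> 0}"
      using y by (intro image_eqI[of _ _ "(xs, \<sigma> \<circ> inv \<rho>)"]) auto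
  qed
  moreover have "finite ((\<lambda>(xs, \<sigma>). (xs, \<sigma> \<circ> \<rho>)) ` {y. f y \<noteq> 0})"
    using assms(2) unfolding fin_supp_def by simp
  ultimately show ?thesis unfolding fin_supp_def by (rule finite_subset)
qed

lemma linop_rtrans: "bij \<rho> \<Longrightarrow> linop (rtrans \<rho>)"
  unfolding linop_def by (auto simp: fin_supp_rtrans rtrans_add rtrans_scale)

lemma perms_bij: "\<rho> \<in> perms N \<Longrightarrow> bij \<rho>"
  unfolding perms_def by (auto simp: permutes_bij)

lemma card_perms: "card (perms N) \<noteq> 0"
proof -
  have "id \<in> perms N" unfolding perms_def by (simp add: permutes_id)
  then show ?thesis using finite_perms[of N] by auto
qed

lemma inv_perms: "\<rho> \<in> perms N \<Longrightarrow> inv \<rho> \<in> perms N"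
  unfolding perms_def by (auto intro: permutes_inv)

lemma free_tensors_rtrans: assumes "\<rho> \<in> perms N" "f \<in> free_tensors m n N L" shows "rtrans \<rho> f \<in> free_tensors m n N L"
  unfolding free_tensors_def
proof (intro CollectI allI impI)
  fix y assume y: "y \<notin> basis_idx m n N L"
  obtain xs \<sigma> where yy: "y = (xs, \<sigma>)" by (cases y)
  have "(xs, \<sigma> \<circ> inv \<rho>) \<notin> basis_idx m n N L"
  proof
    assume "(xs, \<sigma> \<circ> inv \<rho>) \<in> basis_idx m n N L"
    then have "\<sigma> \<circ> inv \<rho> \<circ> \<rho> permutes {1..N}" using assms(1)
      unfolding basis_idx_def perms_def by (auto intro: permutes_compose)
    moreover have "\<sigma> \<circ> inv \<rho> \<circ> \<rho> = \<sigma>" using assms(1) unfolding perms_def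
      by (simp add: comp_assoc permutes_inv_o(2))
    ultimately show False using y yy \<open>(xs, \<sigma> \<circ> inv \<rho>) \<in> basis_idx m n N L\<close> unfolding basis_idx_def by auto
  qed
  then show "rtrans \<rho> f y = 0" using assms(2) yy unfolding free_tensors_def rtrans_def by auto
qed

lemma R_mult_rtrans:
  assumes "fin_supp f"
  shows "R_mult d k c f = (\<lambda>y. \<Sum>\<rho>\<in>perms (d+k). c \<rho> * rtrans \<rho> f y)"
proof
  fix y :: idx
  obtain ys \<pi> where yy: "y = (ys, \<pi>)" by (cases y)
  let ?S = "{x. f x \<noteq> 0}"
  have fin: "finite ?S" using assms unfolding fin_supp_def .
  have "R_mult d k c f y = (\<Sum>x\<in>?S. f x * (\<Sum>\<rho>\<in>perms (d+k). c \<rho> * delta (fst x, snd x \<circ> \<rho>) y))"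
    unfolding R_mult_def lin_ext_def perms_def by (intro sum.cong) (auto split: prod.splits)
  also have "\<dots> = (\<Sum>\<rho>\<in>perms (d+k). c \<rho> * (\<Sum>x\<in>?S. f x * delta (fst x, snd x \<circ> \<rho>) y))"
    by (simp add: sum_distrib_left sum_distrib_right mult_ac sum.swap[of _ ?S])
  also have "\<dots> = (\<Sum>\<rho>\<in>perms (d+k). c \<rho> * rtrans \<rho> f y)"
  proof (rule sum.cong[OF refl])
    fix \<rho> assume \<rho>: "\<rho> \<in> perms (d+k)"
    have b: "bij \<rho>" using perms_bij[OF \<rho>] .
    have "(\<Sum>x\<in>?S. f x * delta (fst x, snd x \<circ> \<rho>) y) = (\<Sum>x\<in>?S. if x = (ys, \<pi> \<circ> inv \<rho>) then f x else 0)"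
      by (rule sum.cong) (auto simp: delta_def yy bij_comp_inv_eq[OF b, symmetric])
    also have "\<dots> = f (ys, \<pi> \<circ> inv \<rho>)" using fin by (auto simp: sum.delta')
    finally show "c \<rho> * (\<Sum>x\<in>?S. f x * delta (fst x, snd x \<circ> \<rho>) y) = c \<rho> * rtrans \<rho> f y"
      by (simp add: yy rtrans_def)
  qed
  finally show "R_mult d k c f y = (\<Sum>\<rho>\<in>perms (d+k). c \<rho> * rtrans \<rho> f y)" .
qed

lemma R_mult_single:
  assumes "fin_supp f" "\<rho> \<in> perms (d+k)"
  shows "R_mult d k (\<lambda>\<rho>'. if \<rho>' = \<rho> then 1 else 0) f = rtrans \<rho> f"
proof -
  have "R_mult d k (\<lambda>\<rho>'. if \<rho>' = \<rho> then 1 else 0) f = (\<lambda>y. \<Sum>\<rho>'\<in>perms (d+k). if \<rho>' = \<rho> then rtrans \<rho>' f y else 0)"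
    unfolding R_mult_rtrans[OF assms(1)] by (intro ext sum.cong) auto
  also have "\<dots> = rtrans \<rho> f" using assms(2) finite_perms by (simp add: sum.delta')
  finally show ?thesis .
qed

lemma linop_R_mult: "linop (R_mult d k c)"
  unfolding R_mult_def
proof (rule linop_lin_ext)
  have "finite {\<rho>. \<rho> permutes {1..d+k}}" by (rule finite_permutations) simp
  then show "fin_supp (case x of (xs, \<sigma>) \<Rightarrow> \<lambda>y. \<Sum>\<rho>\<in>{\<rho>. \<rho> permutes {1..d + k}}. c \<rho> * delta (xs, \<sigma> \<circ> \<rho>) y)" for x
    by (cases x) (auto intro!: fin_supp_sum fin_supp_scale)
qed

lemma rtrans_rel: "bij \<rho> \<Longrightarrow> rtrans \<rho> (rel m i (xs, \<sigma>)) = rel m i (xs, \<sigma> \<circ> \<rho>)"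
  unfolding rel_eq by (simp add: rtrans_diff rtrans_scale rtrans_delta comp_assoc)

lemma R_mult_free_tensors: "f \<in> free_tensors m n (d+k) L \<Longrightarrow> R_mult d k c f \<in> free_tensors m n (d+k) L"
  unfolding R_mult_rtrans[OF free_tensors_fin_supp]
  by (rule csubspace_sum[OF csubspace_free_tensors finite_perms]) (auto intro: free_tensors_rtrans)

lemma R_mult_rel_span: "f \<in> rel_span m n (d+k) L \<Longrightarrow> R_mult d k c f \<in> rel_span m n (d+k) L"
proof (rule linop_rel_span_into[OF linop_R_mult _ _ csubspace_rel_span])
  fix i x assume x: "x \<in> basis_idx m n (d+k) L" "1 \<le> i" "i < L"
  obtain xs \<sigma> where xx: "x = (xs, \<sigma>)" by (cases x)
  show "R_mult d k c (rel m i x) \<in> rel_span m n (d+k) L"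
    unfolding R_mult_rtrans[OF rel_fin_supp]
  proof (rule csubspace_sum[OF csubspace_rel_span finite_perms])
    fix \<rho> assume \<rho>: "\<rho> \<in> perms (d+k)"
    have "(xs, \<sigma> \<circ> \<rho>) \<in> basis_idx m n (d+k) L" using x xx \<rho>
      by (auto simp: basis_idx_def perms_def intro: permutes_compose)
    then show "rtrans \<rho> (rel m i x) \<in> rel_span m n (d+k) L"
      unfolding xx rtrans_rel[OF perms_bij[OF \<rho>]] using x by (intro rel_in_rel_span) auto
  qed
qed

lemma R_mult_add: "fin_supp f \<Longrightarrow> R_mult d k (\<lambda>\<rho>. b1 \<rho> + b2 \<rho>) f = (\<lambda>y. R_mult d k b1 f y + R_mult d k b2 f y)"
  by (simp add: R_mult_rtrans ring_distribs sum.distrib)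

lemma R_mult_scale: "fin_supp f \<Longrightarrow> R_mult d k (\<lambda>\<rho>. c * b \<rho>) f = (\<lambda>y. c * R_mult d k b f y)"
  by (simp add: R_mult_rtrans sum_distrib_left mult_ac)

lemma R_mult_zero: "fin_supp f \<Longrightarrow> R_mult d k (\<lambda>\<rho>. 0) f = (\<lambda>y. 0)"
  by (simp add: R_mult_rtrans)

lemma rtrans_rel_span: "\<rho> \<in> perms (d+k) \<Longrightarrow> r \<in> rel_span m n (d+k) L \<Longrightarrow> rtrans \<rho> r \<in> rel_span m n (d+k) L"
  using R_mult_rel_span[of r m n d k L "\<lambda>\<rho>'. if \<rho>' = \<rho> then 1 else 0"] R_mult_single[OF rel_span_fin_supp] by simp

lemma rtrans_R_mult:
  assumes "\<rho> \<in> perms (d+k)" "fin_supp f"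
  shows "rtrans \<rho> (R_mult d k b f) = R_mult d k (\<lambda>\<sigma>. b (\<sigma> \<circ> inv \<rho>)) f"
proof -
  have b: "bij \<rho>" using perms_bij[OF assms(1)] .
  have "rtrans \<rho> (R_mult d k b f) = (\<lambda>y. \<Sum>\<tau>\<in>perms (d+k). b \<tau> * rtrans (\<tau> \<circ> \<rho>) f y)"
    unfolding R_mult_rtrans[OF assms(2)] rtrans_sum rtrans_scale
    by (intro ext sum.cong refl) (simp add: rtrans_rtrans[OF b perms_bij])
  also have "\<dots> = (\<lambda>y. \<Sum>\<sigma>\<in>perms (d+k). b (\<sigma> \<circ> inv \<rho>) * rtrans \<sigma> f y)"
  proof (intro ext)
    fix y
    show "(\<Sum>\<tau>\<in>perms (d+k). b \<tau> * rtrans (\<tau> \<circ> \<rho>) f y) = (\<Sum>\<sigma>\<in>perms (d+k). b (\<sigma> \<circ> inv \<rho>) * rtrans \<sigma> f y)"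
    proof (rule sum.reindex_bij_witness[of _ "\<lambda>\<sigma>. \<sigma> \<circ> inv \<rho>" "\<lambda>\<tau>. \<tau> \<circ> \<rho>"])
      fix \<tau> assume "\<tau> \<in> perms (d+k)"
      then show "\<tau> \<circ> \<rho> \<circ> inv \<rho> = \<tau>" "\<tau> \<circ> \<rho> \<in> perms (d+k)"
        using assms(1) unfolding perms_def by (auto simp: comp_assoc permutes_inv_o intro: permutes_compose)
      show "b (\<tau> \<circ> \<rho> \<circ> inv \<rho>) * rtrans (\<tau> \<circ> \<rho>) f y = b \<tau> * rtrans (\<tau> \<circ> \<rho>) f y"
        using assms(1) unfolding perms_def by (simp add: comp_assoc permutes_inv_o)
    next
      fix \<sigma> assume "\<sigma> \<in> perms (d+k)"
      then show "\<sigma> \<circ> inv \<rho> \<circ> \<rho> = \<sigma>" "\<sigma> \<circ> inv \<rho> \<in> perms (d+k)"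
        using assms(1) unfolding perms_def by (auto simp: comp_assoc permutes_inv_o intro: permutes_compose permutes_inv)
    qed
  qed
  also have "\<dots> = R_mult d k (\<lambda>\<sigma>. b (\<sigma> \<circ> inv \<rho>)) f" unfolding R_mult_rtrans[OF assms(2)] ..
  finally show ?thesis .
qed

section \<open>Endomorphisms of the quotient\<close>

lemma W_endo_linop:
  assumes "linop T" "\<And>f. f \<in> free_tensors m n (d+k) d \<Longrightarrow> T f \<in> free_tensors m n (d+k) d"
    "\<And>f. f \<in> rel_span m n (d+k) d \<Longrightarrow> T f \<in> rel_span m n (d+k) d"
  shows "W_endo m n d k T"
  unfolding W_endo_def W_free_free_tensors W_rel_rel_span
  using assms free_tensors_fin_supp by (auto intro: linop_add linop_scale)

lemma W_commute_eq:
  assumes "\<And>f. f \<in> free_tensors m n (d+k) d \<Longrightarrow> T (U f) = U (T f)"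
  shows "W_commute m n d k T U"
  unfolding W_commute_def W_eq_def W_free_free_tensors W_rel_rel_span
  using assms csubspace_zero[OF csubspace_rel_span] by simp

lemma W_endo_props:
  assumes "W_endo m n d k T"
  shows "\<And>f. f \<in> free_tensors m n (d+k) d \<Longrightarrow> T f \<in> free_tensors m n (d+k) d"
    and "\<And>f g. f \<in> free_tensors m n (d+k) d \<Longrightarrow> g \<in> free_tensors m n (d+k) d \<Longrightarrow> T (\<lambda>y. f y + g y) = (\<lambda>y. T f y + T g y)"
    and "\<And>f c. f \<in> free_tensors m n (d+k) d \<Longrightarrow> T (\<lambda>y. c * f y) = (\<lambda>y. c * T f y)"
    and "\<And>r. r \<in> rel_span m n (d+k) d \<Longrightarrow> T r \<in> rel_span m n (d+k) d"
  using assms unfolding W_endo_def W_free_free_tensors W_rel_rel_span by auto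

lemma W_endo_sum:
  assumes "W_endo m n d k T" "finite S" "\<And>i. i \<in> S \<Longrightarrow> h i \<in> free_tensors m n (d+k) d"
  shows "T (\<lambda>y. \<Sum>i\<in>S. c i * h i y) = (\<lambda>y. \<Sum>i\<in>S. c i * T (h i) y)"
  using assms(2,3)
proof (induction S rule: finite_induct)
  case empty
  have "T (\<lambda>y. 0 * (\<lambda>y. 0) y) = (\<lambda>y. 0 * T (\<lambda>y. 0) y)" by (rule W_endo_props(3)[OF assms(1)]) simp
  then show ?case by simp
next
  case (insert x F)
  have "T (\<lambda>y. \<Sum>i\<in>insert x F. c i * h i y) = T (\<lambda>y. (\<lambda>y. c x * h x y) y + (\<lambda>y. \<Sum>i\<in>F. c i * h i y) y)"
    using insert by simp
  also have "\<dots> = (\<lambda>y. T (\<lambda>y. c x * h x y) y + T (\<lambda>y. \<Sum>i\<in>F. c i * h i y) y)"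
    using insert by (intro W_endo_props(2)[OF assms(1)] free_tensors_scale csubspace_sum[OF csubspace_free_tensors]) auto
  also have "\<dots> = (\<lambda>y. \<Sum>i\<in>insert x F. c i * T (h i) y)"
    using insert W_endo_props(3)[OF assms(1), of "h x" "c x"] by simp
  finally show ?case .
qed

lemma W_endo_diff:
  assumes "W_endo m n d k T" "f \<in> free_tensors m n (d+k) d" "g \<in> free_tensors m n (d+k) d"
  shows "T (\<lambda>y. f y - g y) = (\<lambda>y. T f y - T g y)"
proof -
  have "T (\<lambda>y. f y - g y) = T (\<lambda>y. \<Sum>i\<in>{True, False}. (if i then 1 else -1) * (if i then f else g) y)"
    by simp
  also have "\<dots> = (\<lambda>y. \<Sum>i\<in>{True, False}. (if i then 1 else -1) * T (if i then f else g) y)"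
    by (rule W_endo_sum[OF assms(1)]) (use assms in auto)
  finally show ?thesis by simp
qed

lemma W_eq_on_basis:
  assumes T: "W_endo m n d k T" and U: "linop U"
    and basis: "\<And>i. i \<in> basis_idx m n (d+k) d \<Longrightarrow> (\<lambda>y. T (delta i) y - U (delta i) y) \<in> rel_span m n (d+k) d"
  shows "W_eq m n d k T U"
  unfolding W_eq_def W_free_free_tensors W_rel_rel_span
proof
  let ?I = "basis_idx m n (d+k) d"
  fix f assume f: "f \<in> free_tensors m n (d+k) d"
  have fd: "f = (\<lambda>y. \<Sum>i\<in>?I. f i * delta i y)" by (rule free_tensors_decomp[OF f])
  have "T f = (\<lambda>y. \<Sum>i\<in>?I. f i * T (delta i) y)"
    by (subst fd, rule W_endo_sum[OF T finite_basis_idx]) (simp add: free_tensors_delta)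
  moreover have "U f = (\<lambda>y. \<Sum>i\<in>?I. f i * U (delta i) y)"
    by (subst fd, rule linop_sum[OF U finite_basis_idx]) simp
  ultimately have "(\<lambda>y. T f y - U f y) = (\<lambda>y. \<Sum>i\<in>?I. f i * (T (delta i) y - U (delta i) y))"
    by (simp add: sum_subtractf algebra_simps)
  also have "\<dots> \<in> rel_span m n (d+k) d" by (rule csubspace_sum[OF csubspace_rel_span finite_basis_idx basis])
  finally show "(\<lambda>y. T f y - U f y) \<in> rel_span m n (d+k) d" .
qed

lemma W_commute_W_eq:
  assumes T: "W_endo m n d k T" and TA: "W_commute m n d k T A" and UA: "W_eq m n d k U A"
    and A: "\<And>f. f \<in> free_tensors m n (d+k) d \<Longrightarrow> A f \<in> free_tensors m n (d+k) d"
    and U: "\<And>f. f \<in> free_tensors m n (d+k) d \<Longrightarrow> U f \<in> free_tensors m n (d+k) d"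
  shows "W_commute m n d k T U"
  unfolding W_commute_def W_eq_def W_free_free_tensors W_rel_rel_span
proof
  let ?R = "rel_span m n (d+k) d"
  fix f assume f: "f \<in> free_tensors m n (d+k) d"
  have UA': "(\<lambda>y. U g y - A g y) \<in> ?R" if "g \<in> free_tensors m n (d+k) d" for g
    using UA that unfolding W_eq_def W_free_free_tensors W_rel_rel_span by blast
  have "(\<lambda>y. T (U f) y - T (A f) y) \<in> ?R"
    using W_endo_props(4)[OF T UA'[OF f]] W_endo_diff[OF T U[OF f] A[OF f]] by simp
  moreover have "(\<lambda>y. T (A f) y - A (T f) y) \<in> ?R"
    using TA f unfolding W_commute_def W_eq_def W_free_free_tensors W_rel_rel_span by auto
  moreover have "(\<lambda>y. U (T f) y - A (T f) y) \<in> ?R" by (rule UA'[OF W_endo_props(1)[OF T f]])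
  ultimately have "(\<lambda>y. ((T (U f) y - T (A f) y) + (T (A f) y - A (T f) y)) - (U (T f) y - A (T f) y)) \<in> ?R"
    by (intro csubspace_diff[OF csubspace_rel_span csubspace_add[OF csubspace_rel_span]])
  then show "(\<lambda>y. (T \<circ> U) f y - (U \<circ> T) f y) \<in> ?R" by (simp add: algebra_simps)
qed

section \<open>The operators on basis tensors\<close>

definition basis_coeff :: "nat \<Rightarrow> nat \<Rightarrow> complex" where "basis_coeff a = (\<lambda>b. if b = a then 1 else 0)"

lemma linop_L_vec: "linop (L_vec m n c)"
  unfolding L_vec_def by (rule linop_lin_ext) (auto intro!: fin_supp_sum fin_supp_scale)

lemma L_vec_delta: "L_vec m n c (delta (xs, \<sigma>)) = (\<lambda>y. \<Sum>a\<in>{1..m+n}. c a * delta (a # xs, \<sigma>) y)"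
  unfolding L_vec_def by simp

lemma L_vec_basis_coeff_delta: "a \<in> {1..m+n} \<Longrightarrow> L_vec m n (basis_coeff a) (delta (xs, \<sigma>)) = delta (a # xs, \<sigma>)"
  unfolding L_vec_delta basis_coeff_def by (rule sum_delta_weight) auto

lemma linop_L_perm: "linop (L_perm \<rho>)"
  unfolding L_perm_def by (rule linop_lin_ext) auto

lemma L_perm_delta: "L_perm \<rho> (delta (xs, \<sigma>)) = delta (xs, shift (length xs) \<rho> \<circ> \<sigma>)"
  unfolding L_perm_def by simp

lemma shift0: "\<rho> permutes {1..N} \<Longrightarrow> shift 0 \<rho> = \<rho>"
  unfolding shift_def by (auto simp: fun_eq_iff permutes_def)

lemma L_perm_delta0: "\<rho> permutes {1..N} \<Longrightarrow> L_perm \<rho> (delta ([], \<sigma>)) = delta ([], \<rho> \<circ> \<sigma>)"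
  by (simp add: L_perm_delta shift0)

text \<open>The sign of moving \<open>e\<^sub>a\<close> past the factors \<open>u\<close>.\<close>

definition koszul_sign :: "nat \<Rightarrow> nat \<Rightarrow> nat list \<Rightarrow> complex" where
  "koszul_sign m a u = (-1) ^ (if is_odd m a then length (filter (is_odd m) u) else 0)"

definition drop_at :: "nat \<Rightarrow> nat list \<Rightarrow> nat list" where
  "drop_at p xs = take p xs @ drop (Suc p) xs"

lemma length_drop_at[simp]: "p < length xs \<Longrightarrow> length (drop_at p xs) = length xs - 1"
  unfolding drop_at_def by simp

lemma nth_drop_at: "p < length xs \<Longrightarrow> j < length xs - 1 \<Longrightarrow> drop_at p xs ! j = (if j < p then xs ! j else xs ! Suc j)"
  unfolding drop_at_def by (auto simp: nth_append min_def)

lemma set_drop_at: "set (drop_at p xs) \<subseteq> set xs"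
  unfolding drop_at_def by (auto dest: in_set_takeD in_set_dropD)

lemma length_filter_swap_adjacent:
  assumes "Suc q < length u"
  shows "length (filter P (u[q := u ! Suc q, Suc q := u ! q])) = length (filter P u)"
proof -
  have u: "u = take q u @ u ! q # u ! Suc q # drop (Suc (Suc q)) u"
    using assms by (metis Suc_lessD id_take_nth_drop Cons_nth_drop_Suc)
  have "u[q := u ! Suc q, Suc q := u ! q] = take q u @ u ! Suc q # u ! q # drop (Suc (Suc q)) u"
    using assms by (subst u) (simp add: list_update_append min_def)
  then show ?thesis by (subst (2) u) simp
qed

lemma koszul_sign_snoc: "koszul_sign m a (u @ [b]) = koszul_sign m a u * (if is_odd m b \<and> is_odd m a then -1 else 1)"
  unfolding koszul_sign_def by auto

lemma koszul_sign_Nil[simp]: "koszul_sign m a [] = 1" unfolding koszul_sign_def by simp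

text \<open>Positions are reindexed from the left and from \<open>0\<close>: the factor at position \<open>k\<close> of
  \<open>L_dual_basis\<close> is \<open>xs ! p\<close> with \<open>p = length xs - k\<close>.\<close>

lemma L_dual_basis_eq:
  "L_dual_basis m a (xs, \<sigma>) = (\<lambda>y. \<Sum>p\<in>{0..<length xs}. (if xs ! p = a then
      koszul_sign m a (take p xs) * delta (drop_at p xs, cyc (length xs - p) (length xs) \<circ> \<sigma>) y else 0))"
proof
  fix y
  let ?L = "length xs"
  show "L_dual_basis m a (xs, \<sigma>) y = (\<Sum>p\<in>{0..<?L}. (if xs ! p = a then
      koszul_sign m a (take p xs) * delta (drop_at p xs, cyc (?L - p) ?L \<circ> \<sigma>) y else 0))"
    unfolding L_dual_basis_def prod.case
    by (rule sum.reindex_bij_witness[of _ "\<lambda>p. ?L - p" "\<lambda>k. ?L - k"])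
       (auto simp: koszul_sign_def drop_at_def Suc_diff_le)
qed

lemma fin_supp_L_dual_basis: "fin_supp (L_dual_basis m a x)"
  by (cases x) (auto simp: L_dual_basis_eq intro!: fin_supp_sum)

lemma linop_L_dual: "linop (L_dual m n c)"
  unfolding L_dual_def by (rule linop_lin_ext) (auto intro!: fin_supp_sum fin_supp_scale fin_supp_L_dual_basis)

lemma L_dual_delta: "L_dual m n c (delta x) = (\<lambda>y. \<Sum>a\<in>{1..m+n}. c a * L_dual_basis m a x y)"
  unfolding L_dual_def by simp

lemma L_dual_basis_coeff_delta: "a \<in> {1..m+n} \<Longrightarrow> L_dual m n (basis_coeff a) (delta x) = L_dual_basis m a x"
  unfolding L_dual_delta basis_coeff_def by (rule sum_delta_weight) auto

definition dual_coeff :: "nat \<Rightarrow> nat \<Rightarrow> nat list \<Rightarrow> nat \<Rightarrow> complex" where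
  "dual_coeff m a w p = (if w ! p = a then koszul_sign m a (take p w) else 0)"

definition dual_term :: "nat \<Rightarrow> nat \<Rightarrow> nat list \<Rightarrow> (nat \<Rightarrow> nat) \<Rightarrow> nat \<Rightarrow> vec" where
  "dual_term m a w \<sigma> p = (\<lambda>y. dual_coeff m a w p * delta (drop_at p w, cyc (length w - p) (length w) \<circ> \<sigma>) y)"

lemma L_dual_basis_dual_terms:
  "L_dual_basis m a (xs, \<sigma>) = (\<lambda>y. \<Sum>p\<in>{0..<length xs}. dual_term m a xs \<sigma> p y)"
  unfolding L_dual_basis_eq dual_term_def dual_coeff_def by (intro ext sum.cong) auto

lemma L_vec_rtrans: assumes "bij \<rho>" "fin_supp f" shows "L_vec m n c (rtrans \<rho> f) = rtrans \<rho> (L_vec m n c f)"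
proof -
  have "(L_vec m n c \<circ> rtrans \<rho>) f = (rtrans \<rho> \<circ> L_vec m n c) f"
  proof (rule linop_ext'[OF _ _ assms(2)])
    show "linop (L_vec m n c \<circ> rtrans \<rho>)" "linop (rtrans \<rho> \<circ> L_vec m n c)"
      using assms linop_rtrans linop_L_vec by auto
    fix x :: idx obtain xs \<sigma> where x: "x = (xs, \<sigma>)" by (cases x)
    show "(L_vec m n c \<circ> rtrans \<rho>) (delta x) = (rtrans \<rho> \<circ> L_vec m n c) (delta x)"
      unfolding x by (simp add: rtrans_delta[OF assms(1)] L_vec_delta rtrans_sum rtrans_scale)
  qed
  then show ?thesis by simp
qed

lemma L_perm_rtrans: assumes "bij \<rho>" "fin_supp f" shows "L_perm \<tau> (rtrans \<rho> f) = rtrans \<rho> (L_perm \<tau> f)"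
proof -
  have "(L_perm \<tau> \<circ> rtrans \<rho>) f = (rtrans \<rho> \<circ> L_perm \<tau>) f"
  proof (rule linop_ext'[OF _ _ assms(2)])
    show "linop (L_perm \<tau> \<circ> rtrans \<rho>)" "linop (rtrans \<rho> \<circ> L_perm \<tau>)"
      using assms linop_rtrans linop_L_perm by auto
    fix x :: idx obtain xs \<sigma> where x: "x = (xs, \<sigma>)" by (cases x)
    show "(L_perm \<tau> \<circ> rtrans \<rho>) (delta x) = (rtrans \<rho> \<circ> L_perm \<tau>) (delta x)"
      unfolding x by (simp add: rtrans_delta[OF assms(1)] L_perm_delta comp_assoc)
  qed
  then show ?thesis by simp
qed

lemma L_dual_basis_rtrans: assumes "bij \<rho>" shows "rtrans \<rho> (L_dual_basis m a (xs, \<sigma>)) = L_dual_basis m a (xs, \<sigma> \<circ> \<rho>)"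
  unfolding L_dual_basis_eq rtrans_sum by (intro ext sum.cong) (auto simp: rtrans_scale rtrans_delta[OF assms] comp_assoc)

lemma L_dual_rtrans: assumes "bij \<rho>" "fin_supp f" shows "L_dual m n c (rtrans \<rho> f) = rtrans \<rho> (L_dual m n c f)"
proof -
  have "(L_dual m n c \<circ> rtrans \<rho>) f = (rtrans \<rho> \<circ> L_dual m n c) f"
  proof (rule linop_ext'[OF _ _ assms(2)])
    show "linop (L_dual m n c \<circ> rtrans \<rho>)" "linop (rtrans \<rho> \<circ> L_dual m n c)"
      using assms linop_rtrans linop_L_dual by auto
    fix x :: idx obtain xs \<sigma> where x: "x = (xs, \<sigma>)" by (cases x)
    show "(L_dual m n c \<circ> rtrans \<rho>) (delta x) = (rtrans \<rho> \<circ> L_dual m n c) (delta x)"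
      unfolding x by (simp add: rtrans_delta[OF assms(1)] L_dual_delta rtrans_sum rtrans_scale L_dual_basis_rtrans[OF assms(1)])
  qed
  then show ?thesis by simp
qed

lemma L_vec_free_tensors: assumes "f \<in> free_tensors m n N L" shows "L_vec m n c f \<in> free_tensors m n N (Suc L)"
proof (rule linop_free_tensors_into[OF linop_L_vec csubspace_free_tensors assms])
  fix x assume x: "x \<in> basis_idx m n N L"
  obtain xs \<sigma> where xx: "x = (xs, \<sigma>)" by (cases x)
  show "L_vec m n c (delta x) \<in> free_tensors m n N (Suc L)"
    unfolding xx L_vec_delta
    by (rule csubspace_sum[OF csubspace_free_tensors]) (use x xx in \<open>auto intro!: free_tensors_delta simp: basis_idx_def\<close>)
qed

lemma L_dual_basis_free_tensors:
  assumes "(xs, \<sigma>) \<in> basis_idx m n N L" "L \<le> N"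
  shows "L_dual_basis m a (xs, \<sigma>) \<in> free_tensors m n N (L - 1)"
  unfolding L_dual_basis_eq
proof (rule csubspace_sum'[OF csubspace_free_tensors])
  show "finite {0..<length xs}" by simp
  fix p assume "p \<in> {0..<length xs}"
  then have p: "p < length xs" by simp
  have "cyc (length xs - p) (length xs) \<circ> \<sigma> permutes {1..N}"
    using assms p by (intro permutes_compose cyc_permutes) (auto simp: basis_idx_def)
  moreover have "set (drop_at p xs) \<subseteq> {1..m+n}" using assms unfolding basis_idx_def drop_at_def
    by (auto dest: in_set_takeD in_set_dropD)
  ultimately have "delta (drop_at p xs, cyc (length xs - p) (length xs) \<circ> \<sigma>) \<in> free_tensors m n N (L - 1)"
    using assms p by (intro free_tensors_delta) (auto simp: basis_idx_def drop_at_def)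
  then show "(\<lambda>y. if xs ! p = a then koszul_sign m a (take p xs) * delta (drop_at p xs, cyc (length xs - p) (length xs) \<circ> \<sigma>) y else 0)
      \<in> free_tensors m n N (L - 1)"
    by (cases "xs ! p = a") (auto intro: free_tensors_scale)
qed

lemma L_dual_free_tensors: assumes "f \<in> free_tensors m n N L" "L \<le> N" shows "L_dual m n c f \<in> free_tensors m n N (L - 1)"
proof (rule linop_free_tensors_into[OF linop_L_dual csubspace_free_tensors assms(1)])
  fix x assume x: "x \<in> basis_idx m n N L"
  obtain xs \<sigma> where xx: "x = (xs, \<sigma>)" by (cases x)
  show "L_dual m n c (delta x) \<in> free_tensors m n N (L - 1)"
    unfolding L_dual_delta
    by (rule csubspace_sum[OF csubspace_free_tensors]) (use x xx assms(2) L_dual_basis_free_tensors in auto)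
qed

lemma L_perm_free_tensors: assumes "f \<in> free_tensors m n N 0" "\<rho> permutes {1..N}" shows "L_perm \<rho> f \<in> free_tensors m n N 0"
proof (rule linop_free_tensors_into[OF linop_L_perm csubspace_free_tensors assms(1)])
  fix x assume x: "x \<in> basis_idx m n N 0"
  obtain xs \<sigma> where xx: "x = (xs, \<sigma>)" by (cases x)
  show "L_perm \<rho> (delta x) \<in> free_tensors m n N 0"
    using x assms(2) unfolding xx by (auto simp: basis_idx_def L_perm_delta0 intro!: free_tensors_delta permutes_compose)
qed

lemma L_vec_rel:
  assumes "x \<in> basis_idx m n N L" "1 \<le> i" "i < L"
  shows "L_vec m n c (rel m i x) \<in> rel_span m n N (Suc L)"
proof -
  obtain xs \<sigma> where xx: "x = (xs, \<sigma>)" by (cases x)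
  have len: "length xs = L" using assms xx by (auto simp: basis_idx_def)
  define p where "p = length xs - i - 1"
  have p: "Suc p < L" using assms len p_def by auto
  define \<epsilon> where "\<epsilon> = (if is_odd m (xs ! p) \<and> is_odd m (xs ! Suc p) then -1 else 1 :: complex)"
  have r: "rel m i (xs, \<sigma>) = (\<lambda>y. \<epsilon> * delta (xs[p := xs ! Suc p, Suc p := xs ! p], \<sigma>) y - delta (xs, s i \<circ> \<sigma>) y)"
    unfolding rel_eq p_def \<epsilon>_def by simp
  have ra: "rel m i (a # xs, \<sigma>) = (\<lambda>y. \<epsilon> * delta (a # xs[p := xs ! Suc p, Suc p := xs ! p], \<sigma>) y - delta (a # xs, s i \<circ> \<sigma>) y)" for a
  proof -
    have e: "length (a # xs) - i - 1 = Suc p" using p len p_def assms(3) by auto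
    show ?thesis unfolding rel_eq e \<epsilon>_def by simp
  qed
  have "L_vec m n c (rel m i x) = (\<lambda>y. \<epsilon> * L_vec m n c (delta (xs[p := xs ! Suc p, Suc p := xs ! p], \<sigma>)) y
        - L_vec m n c (delta (xs, s i \<circ> \<sigma>)) y)"
    unfolding xx r by (simp add: linop_diff[OF linop_L_vec] linop_scale[OF linop_L_vec])
  also have "\<dots> = (\<lambda>y. \<Sum>a\<in>{1..m+n}. c a * rel m i (a # xs, \<sigma>) y)"
    unfolding L_vec_delta ra by (simp add: sum_distrib_left sum_subtractf algebra_simps)
  also have "\<dots> \<in> rel_span m n N (Suc L)"
    by (rule csubspace_sum[OF csubspace_rel_span], simp, rule rel_in_rel_span) (use assms xx len in \<open>auto simp: basis_idx_def\<close>)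
  finally show ?thesis .
qed

lemma L_vec_rel_span:
  assumes "f \<in> rel_span m n N L" shows "L_vec m n c f \<in> rel_span m n N (Suc L)"
  by (rule linop_rel_span_into[OF linop_L_vec assms L_vec_rel csubspace_rel_span])

lemma dual_coeff_swap:
  assumes "length z = L" "Suc q < L" "p < L" "p \<noteq> q" "p \<noteq> Suc q"
  shows "dual_coeff m a (z[q := z ! Suc q, Suc q := z ! q]) p = dual_coeff m a z p"
proof (cases "p < q")
  case True
  then show ?thesis unfolding dual_coeff_def using assms by (simp add: nth_list_update)
next
  case False
  then have pq: "Suc (Suc q) \<le> p" using assms by auto
  have "take p (z[q := z ! Suc q, Suc q := z ! q]) = (take p z)[q := take p z ! Suc q, Suc q := take p z ! q]"
    using pq by (simp add: take_update_swap)
  then have "length (filter (is_odd m) (take p (z[q := z ! Suc q, Suc q := z ! q])))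
      = length (filter (is_odd m) (take p z))"
    using length_filter_swap_adjacent[of q "take p z"] pq assms by simp
  moreover have "z[q := z ! Suc q, Suc q := z ! q] ! p = z ! p" using pq assms by simp
  ultimately show ?thesis unfolding dual_coeff_def koszul_sign_def by simp
qed

lemma drop_at_swap_adjacent:
  assumes len: "length z = L" and i: "1 \<le> i" "i < L" and p: "p < L" "p \<noteq> L - i - 1" "p \<noteq> L - i"
  defines "q \<equiv> L - i - 1" and "w \<equiv> drop_at p z"
  obtains i' where "1 \<le> i'" "i' < L - 1"
    and "drop_at p (z[q := z ! Suc q, Suc q := z ! q])
      = w[L - 1 - i' - 1 := w ! Suc (L - 1 - i' - 1), Suc (L - 1 - i' - 1) := w ! (L - 1 - i' - 1)]"
    and "w ! (L - 1 - i' - 1) = z ! q" "w ! Suc (L - 1 - i' - 1) = z ! Suc q"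
    and "cyc (L - p) L \<circ> s i = s i' \<circ> cyc (L - p) L"
proof (cases "p < q")
  case True
  have e: "L - 1 - i - 1 = q - 1" "Suc (q - 1) = q" using True unfolding q_def by auto
  have q: "Suc q < L" using i unfolding q_def by auto
  show ?thesis
  proof (rule that[of i])
    show "drop_at p (z[q := z ! Suc q, Suc q := z ! q])
        = w[L - 1 - i - 1 := w ! Suc (L - 1 - i - 1), Suc (L - 1 - i - 1) := w ! (L - 1 - i - 1)]"
      unfolding e w_def using True q len
      by (intro nth_equalityI) (auto simp: nth_drop_at nth_list_update less_Suc_eq)
    show "w ! (L - 1 - i - 1) = z ! q" "w ! Suc (L - 1 - i - 1) = z ! Suc q"
      unfolding e w_def using True q len by (auto simp: nth_drop_at)
    show "cyc (L - p) L \<circ> s i = s i \<circ> cyc (L - p) L"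
      by (rule cyc_s_high) (use True i p in \<open>auto simp: q_def\<close>)
  qed (use True i p in \<open>auto simp: q_def\<close>)
next
  case False
  then have pq: "Suc (Suc q) \<le> p" using p i unfolding q_def by auto
  have e: "L - 1 - (i - 1) - 1 = q" unfolding q_def using i pq p by simp
  show ?thesis
  proof (rule that[of "i - 1"])
    show "drop_at p (z[q := z ! Suc q, Suc q := z ! q]) = w[L - 1 - (i - 1) - 1 := w ! Suc (L - 1 - (i - 1) - 1),
        Suc (L - 1 - (i - 1) - 1) := w ! (L - 1 - (i - 1) - 1)]"
      unfolding e w_def using pq len p
      by (intro nth_equalityI) (auto simp: nth_drop_at nth_list_update less_Suc_eq)
    show "w ! (L - 1 - (i - 1) - 1) = z ! q" "w ! Suc (L - 1 - (i - 1) - 1) = z ! Suc q"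
      unfolding e w_def using pq len p by (auto simp: nth_drop_at)
    show "cyc (L - p) L \<circ> s i = s (i - 1) \<circ> cyc (L - p) L"
      by (rule cyc_s_low) (use pq i p in \<open>auto simp: q_def\<close>)
  qed (use pq i p in \<open>auto simp: q_def\<close>)
qed

text \<open>The terms of \<open>L(e\<^sub>a\<^sup>*)\<close> removing a factor outside the swapped pair differ by a relation.\<close>

lemma dual_term_swap_rel:
  assumes zI: "(z, \<tau>) \<in> basis_idx m n N L" and i: "1 \<le> i" "i < L" and LN: "L \<le> N"
    and p: "p < L" "p \<noteq> L - i - 1" "p \<noteq> L - i"
  defines "q \<equiv> L - i - 1"
  defines "z' \<equiv> z[q := z ! Suc q, Suc q := z ! q]"
  defines "\<epsilon> \<equiv> (if is_odd m (z ! q) \<and> is_odd m (z ! Suc q) then -1 else 1 :: complex)"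
  shows "(\<lambda>y. \<epsilon> * dual_term m a z' \<tau> p y - dual_term m a z (s i \<circ> \<tau>) p y) \<in> rel_span m n N (L - 1)"
proof -
  have len: "length z = L" and len': "length z' = L" using zI unfolding z'_def by (auto simp: basis_idx_def)
  define w where "w = drop_at p z"
  define \<sigma> where "\<sigma> = cyc (L - p) L \<circ> \<tau>"
  have lw: "length w = L - 1" unfolding w_def using p len by simp
  have "\<sigma> permutes {1..N}"
    unfolding \<sigma>_def using zI LN p by (intro permutes_compose cyc_permutes) (auto simp: basis_idx_def)
  then have wI: "(w, \<sigma>) \<in> basis_idx m n N (L - 1)"
    using lw zI set_drop_at[of p z] unfolding w_def by (auto simp: basis_idx_def)
  have coeff: "dual_coeff m a z' p = dual_coeff m a z p"
    unfolding z'_def by (rule dual_coeff_swap[OF len]) (use i p in \<open>auto simp: q_def\<close>)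
  obtain i' where i': "1 \<le> i'" "i' < L - 1"
    and swap: "drop_at p z' = w[L - 1 - i' - 1 := w ! Suc (L - 1 - i' - 1), Suc (L - 1 - i' - 1) := w ! (L - 1 - i' - 1)]"
    and wn: "w ! (L - 1 - i' - 1) = z ! q" "w ! Suc (L - 1 - i' - 1) = z ! Suc q"
    and cy: "cyc (L - p) L \<circ> s i = s i' \<circ> cyc (L - p) L"
    using drop_at_swap_adjacent[OF len i p] unfolding q_def z'_def w_def by blast
  have "(\<lambda>y. \<epsilon> * dual_term m a z' \<tau> p y - dual_term m a z (s i \<circ> \<tau>) p y)
      = (\<lambda>y. dual_coeff m a z p * rel m i' (w, \<sigma>) y)"
    unfolding dual_term_def rel_eq lw len len' swap wn coeff
    by (auto simp: \<epsilon>_def w_def \<sigma>_def algebra_simps comp_assoc[symmetric] cy)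
  also have "\<dots> \<in> rel_span m n N (L - 1)"
    by (rule csubspace_scale[OF csubspace_rel_span rel_in_rel_span[OF wI i'(1,2)]])
  finally show ?thesis .
qed

text \<open>Removing either factor of the swapped pair gives the same tensor up to the Koszul sign.\<close>

lemma dual_terms_swap_cancel:
  fixes m a :: nat
  assumes len: "length z = L" and i: "1 \<le> i" "i < L"
  defines "q \<equiv> L - i - 1"
  defines "z' \<equiv> z[q := z ! Suc q, Suc q := z ! q]"
  defines "\<epsilon> \<equiv> (if is_odd m (z ! q) \<and> is_odd m (z ! Suc q) then -1 else 1 :: complex)"
  shows "\<epsilon> * dual_term m a z' \<tau> q y + \<epsilon> * dual_term m a z' \<tau> (Suc q) y
    = dual_term m a z (s i \<circ> \<tau>) q y + dual_term m a z (s i \<circ> \<tau>) (Suc q) y"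
proof -
  have len': "length z' = L" unfolding z'_def using len by simp
  have q: "Suc q < L" "L - q = Suc i" "L - Suc q = i" using i unfolding q_def by auto
  have z'nth: "z' ! j = (if j = q then z ! Suc q else if j = Suc q then z ! q else z ! j)" if "j < L" for j
    using that q len unfolding z'_def by (auto simp: nth_list_update)
  have drop1: "drop_at (Suc q) z' = drop_at q z" and drop2: "drop_at q z' = drop_at (Suc q) z"
    using q len len' by (auto intro!: nth_equalityI simp: nth_drop_at z'nth less_Suc_eq)
  have take1: "take (Suc q) z' = take q z @ [z ! Suc q]"
    using q len unfolding z'_def by (simp add: take_Suc_conv_app_nth nth_list_update)
  have take2: "take (Suc q) z = take q z @ [z ! q]" and take0: "take q z' = take q z"
    using q len unfolding z'_def by (simp_all add: take_Suc_conv_app_nth)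
  have cy1: "cyc i L = cyc (Suc i) L \<circ> s i" by (rule cyc_step) (use i in auto)
  have cy2: "cyc i L \<circ> (s i \<circ> \<tau>) = cyc (Suc i) L \<circ> \<tau>"
    unfolding cy1 by (simp add: fun_eq_iff s_def)
  have "\<epsilon> * dual_term m a z' \<tau> (Suc q) y = dual_term m a z (s i \<circ> \<tau>) q y"
    unfolding dual_term_def dual_coeff_def len len' drop1 take1 q(2,3) cy1 koszul_sign_snoc \<epsilon>_def
    using q len by (auto simp: z'nth comp_assoc)
  moreover have "\<epsilon> * dual_term m a z' \<tau> q y = dual_term m a z (s i \<circ> \<tau>) (Suc q) y"
    unfolding dual_term_def dual_coeff_def len len' drop2 take2 take0 q(2,3) cy2 koszul_sign_snoc \<epsilon>_def
    using q len by (auto simp: z'nth)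
  ultimately show ?thesis by simp
qed

lemma L_dual_basis_rel:
  assumes zI: "(z, \<tau>) \<in> basis_idx m n N L" and i: "1 \<le> i" "i < L" and LN: "L \<le> N"
  defines "q \<equiv> L - i - 1"
  defines "z' \<equiv> z[q := z ! Suc q, Suc q := z ! q]"
  defines "\<epsilon> \<equiv> (if is_odd m (z ! q) \<and> is_odd m (z ! Suc q) then -1 else 1 :: complex)"
  shows "(\<lambda>y. \<epsilon> * L_dual_basis m a (z', \<tau>) y - L_dual_basis m a (z, s i \<circ> \<tau>) y) \<in> rel_span m n N (L - 1)"
proof -
  have len: "length z = L" and len': "length z' = L" using zI unfolding z'_def by (auto simp: basis_idx_def)
  have q: "q \<in> {0..<L}" "Suc q \<in> {0..<L}" "q \<noteq> Suc q" using i unfolding q_def by auto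
  define h where "h p = (\<lambda>y. \<epsilon> * dual_term m a z' \<tau> p y - dual_term m a z (s i \<circ> \<tau>) p y)" for p
  have "(\<lambda>y. \<epsilon> * L_dual_basis m a (z', \<tau>) y - L_dual_basis m a (z, s i \<circ> \<tau>) y)
      = (\<lambda>y. \<Sum>p\<in>{0..<L}. h p y)"
    unfolding L_dual_basis_dual_terms len len' h_def by (simp add: sum_subtractf sum_distrib_left)
  also have "\<dots> = (\<lambda>y. \<Sum>p\<in>{0..<L} - {q, Suc q}. h p y)"
  proof
    fix y
    have "(\<Sum>p\<in>{0..<L}. h p y) = (\<Sum>p\<in>{0..<L} - {q, Suc q}. h p y) + (h q y + h (Suc q) y)"
      using sum.subset_diff[of "{q, Suc q}" "{0..<L}" "\<lambda>p. h p y"] q by simp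
    moreover have "\<epsilon> * dual_term m a z' \<tau> q y + \<epsilon> * dual_term m a z' \<tau> (Suc q) y
        = dual_term m a z (s i \<circ> \<tau>) q y + dual_term m a z (s i \<circ> \<tau>) (Suc q) y"
      using dual_terms_swap_cancel[OF len i, of m a \<tau> y] unfolding q_def z'_def \<epsilon>_def .
    then have "h q y + h (Suc q) y = 0" unfolding h_def by (simp add: algebra_simps)
    ultimately show "(\<Sum>p\<in>{0..<L}. h p y) = (\<Sum>p\<in>{0..<L} - {q, Suc q}. h p y)" by simp
  qed
  also have "\<dots> \<in> rel_span m n N (L - 1)"
    by (rule csubspace_sum'[OF csubspace_rel_span])
       (use dual_term_swap_rel[OF zI i LN] q in \<open>auto simp: h_def q_def z'_def \<epsilon>_def\<close>)
  finally show ?thesis .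
qed

lemma L_dual_rel:
  assumes "x \<in> basis_idx m n N L" "1 \<le> i" "i < L" "L \<le> N"
  shows "L_dual m n c (rel m i x) \<in> rel_span m n N (L - 1)"
proof -
  obtain z \<tau> where xx: "x = (z, \<tau>)" by (cases x)
  have len: "length z = L" using assms xx by (auto simp: basis_idx_def)
  define q where "q = L - i - 1"
  define z' where "z' = z[q := z ! Suc q, Suc q := z ! q]"
  define \<epsilon> where "\<epsilon> = (if is_odd m (z ! q) \<and> is_odd m (z ! Suc q) then -1 else 1 :: complex)"
  have r: "rel m i (z, \<tau>) = (\<lambda>y. \<epsilon> * delta (z', \<tau>) y - delta (z, s i \<circ> \<tau>) y)"
    unfolding rel_eq len \<epsilon>_def z'_def q_def by simp
  have "L_dual m n c (rel m i x) = (\<lambda>y. \<epsilon> * L_dual m n c (delta (z', \<tau>)) y - L_dual m n c (delta (z, s i \<circ> \<tau>)) y)"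
    unfolding xx r by (simp add: linop_diff[OF linop_L_dual] linop_scale[OF linop_L_dual])
  also have "\<dots> = (\<lambda>y. \<Sum>a\<in>{1..m+n}. c a * (\<epsilon> * L_dual_basis m a (z', \<tau>) y - L_dual_basis m a (z, s i \<circ> \<tau>) y))"
    unfolding L_dual_delta by (simp add: sum_distrib_left sum_subtractf algebra_simps)
  also have "\<dots> \<in> rel_span m n N (L - 1)"
  proof (rule csubspace_sum[OF csubspace_rel_span])
    show "finite {1..m+n}" by simp
    fix a
    show "(\<lambda>y. \<epsilon> * L_dual_basis m a (z', \<tau>) y - L_dual_basis m a (z, s i \<circ> \<tau>) y) \<in> rel_span m n N (L - 1)"
      unfolding \<epsilon>_def z'_def q_def by (rule L_dual_basis_rel) (use assms xx in auto)
  qed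
  finally show ?thesis .
qed

lemma L_dual_rel_span:
  assumes "f \<in> rel_span m n N L" "L \<le> N" shows "L_dual m n c f \<in> rel_span m n N (L - 1)"
  by (rule linop_rel_span_into[OF linop_L_dual assms(1) L_dual_rel csubspace_rel_span]) (use assms(2) in auto)

section \<open>The number operator\<close>

lemma rel_swap_adjacent:
  "rel m (Suc (length suf)) (pre @ b # a # suf, \<sigma>) = (\<lambda>y.
     (if is_odd m b \<and> is_odd m a then -1 else 1) * delta (pre @ a # b # suf, \<sigma>) y
     - delta (pre @ b # a # suf, s (Suc (length suf)) \<circ> \<sigma>) y)"
proof -
  have "length (pre @ b # a # suf) - Suc (length suf) - 1 = length pre" by simp
  then show ?thesis unfolding rel_eq by (simp add: nth_append list_update_append)
qed

lemma move_to_front_congruent: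
  assumes "(pre @ a # suf, \<tau>) \<in> basis_idx m n N L" "L \<le> N"
  shows "(\<lambda>y. koszul_sign m a pre * delta (a # pre @ suf, cyc (L - length pre) L \<circ> \<tau>) y
              - delta (pre @ a # suf, \<tau>) y) \<in> rel_span m n N L"
  using assms
proof (induction pre arbitrary: \<tau> suf rule: rev_induct)
  case Nil
  have L: "L = length (a # suf)" using Nil by (auto simp: basis_idx_def)
  have "cyc L L = id" by (rule cyc_triv) simp
  then show ?case using L csubspace_zero[OF csubspace_rel_span] by simp
next
  case (snoc b pre)
  define k where "k = Suc (length suf)"
  define \<epsilon> where "\<epsilon> = (if is_odd m b \<and> is_odd m a then -1 else 1 :: complex)"
  have L: "L = length pre + k + 1" using snoc.prems unfolding k_def by (auto simp: basis_idx_def)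
  have "s k permutes {1..N}" using L snoc.prems(2) by (intro s_permutes) (auto simp: k_def)
  then have swapI: "(pre @ b # a # suf, s k \<circ> \<tau>) \<in> basis_idx m n N L"
    and swapI': "(pre @ a # b # suf, s k \<circ> \<tau>) \<in> basis_idx m n N L"
    using snoc.prems by (auto simp: basis_idx_def intro: permutes_compose)
  have "rel m k (pre @ b # a # suf, s k \<circ> \<tau>) \<in> rel_span m n N L"
    by (rule rel_in_rel_span[OF swapI]) (use L in \<open>auto simp: k_def\<close>)
  then have swap: "(\<lambda>y. \<epsilon> * delta (pre @ a # b # suf, s k \<circ> \<tau>) y - delta (pre @ b # a # suf, \<tau>) y)
      \<in> rel_span m n N L"
    unfolding k_def rel_swap_adjacent \<epsilon>_def by (simp add: comp_assoc[symmetric])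
  have "cyc k L = cyc (Suc k) L \<circ> s k" by (rule cyc_step) (use L in auto)
  then have cy: "cyc (L - length pre) L \<circ> (s k \<circ> \<tau>) = cyc k L \<circ> \<tau>"
    using L by (simp add: comp_assoc Suc_diff_le)
  have "(\<lambda>y. \<epsilon> * (koszul_sign m a pre * delta (a # pre @ b # suf, cyc k L \<circ> \<tau>) y
              - delta (pre @ a # b # suf, s k \<circ> \<tau>) y)
          + (\<epsilon> * delta (pre @ a # b # suf, s k \<circ> \<tau>) y - delta (pre @ b # a # suf, \<tau>) y))
        \<in> rel_span m n N L"
    by (rule csubspace_add[OF csubspace_rel_span csubspace_scale[OF csubspace_rel_span] swap])
       (use snoc.IH[OF swapI' snoc.prems(2)] in \<open>simp only: cy append.simps append_Cons\<close>)
  moreover have "L - length (pre @ [b]) = k" using L by simp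
  moreover have "koszul_sign m a (pre @ [b]) = koszul_sign m a pre * \<epsilon>"
    unfolding koszul_sign_snoc \<epsilon>_def by simp
  ultimately show ?case by (simp add: algebra_simps comp_def)
qed

lemma number_op_delta:
  assumes len: "length z = L" and setz: "set z \<subseteq> {1..m+n}"
  shows "(\<lambda>y. \<Sum>a\<in>{1..m+n}. L_vec m n (basis_coeff a) (L_dual m n (basis_coeff a) (delta (z, \<tau>))) y)
    = (\<lambda>y. \<Sum>p\<in>{0..<L}. koszul_sign m (z ! p) (take p z) * delta (z ! p # drop_at p z, cyc (L - p) L \<circ> \<tau>) y)"
proof -
  have A: "L_vec m n (basis_coeff a) (L_dual m n (basis_coeff a) (delta (z, \<tau>))) =
     (\<lambda>y. \<Sum>p\<in>{0..<L}. (if z ! p = a then koszul_sign m a (take p z) else 0) * delta (a # drop_at p z, cyc (L - p) L \<circ> \<tau>) y)"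
    if a: "a \<in> {1..m+n}" for a
    unfolding L_dual_basis_coeff_delta[OF a] L_dual_basis_dual_terms dual_term_def dual_coeff_def len
    by (simp add: linop_sum[OF linop_L_vec] L_vec_basis_coeff_delta[OF a])
  have "(\<lambda>y. \<Sum>a\<in>{1..m+n}. L_vec m n (basis_coeff a) (L_dual m n (basis_coeff a) (delta (z, \<tau>))) y)
      = (\<lambda>y. \<Sum>p\<in>{0..<L}. \<Sum>a\<in>{1..m+n}. (if z ! p = a then koszul_sign m a (take p z) * delta (a # drop_at p z, cyc (L - p) L \<circ> \<tau>) y else 0))"
    by (subst sum.swap) (auto simp: A intro!: sum.cong)
  also have "\<dots> = (\<lambda>y. \<Sum>p\<in>{0..<L}. koszul_sign m (z ! p) (take p z) * delta (z ! p # drop_at p z, cyc (L - p) L \<circ> \<tau>) y)"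
  proof (intro ext sum.cong refl)
    fix y p assume "p \<in> {0..<L}"
    then have "z ! p \<in> {1..m+n}" using setz len by (auto dest: nth_mem)
    then show "(\<Sum>a\<in>{1..m+n}. (if z ! p = a then koszul_sign m a (take p z) * delta (a # drop_at p z, cyc (L - p) L \<circ> \<tau>) y else 0))
       = koszul_sign m (z ! p) (take p z) * delta (z ! p # drop_at p z, cyc (L - p) L \<circ> \<tau>) y"
      by (simp add: sum.delta)
  qed
  finally show ?thesis .
qed

lemma number_op_defect_delta:
  assumes "(z, \<tau>) \<in> basis_idx m n N L" "L \<le> N"
  shows "(\<lambda>y. (\<Sum>a\<in>{1..m+n}. L_vec m n (basis_coeff a) (L_dual m n (basis_coeff a) (delta (z, \<tau>))) y) - of_nat L * delta (z, \<tau>) y)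
     \<in> rel_span m n N L"
proof -
  have len: "length z = L" and setz: "set z \<subseteq> {1..m+n}" using assms by (auto simp: basis_idx_def)
  let ?t = "\<lambda>p. delta (z ! p # drop_at p z, cyc (L - p) L \<circ> \<tau>)"
  have "(\<lambda>y. (\<Sum>a\<in>{1..m+n}. L_vec m n (basis_coeff a) (L_dual m n (basis_coeff a) (delta (z, \<tau>))) y) - of_nat L * delta (z, \<tau>) y)
      = (\<lambda>y. \<Sum>p\<in>{0..<L}. (koszul_sign m (z ! p) (take p z) * ?t p y - delta (z, \<tau>) y))"
    using fun_cong[OF number_op_delta[OF len setz, where \<tau>=\<tau>]] by (simp add: sum_subtractf)
  also have "\<dots> \<in> rel_span m n N L"
  proof (rule csubspace_sum'[OF csubspace_rel_span], simp)
    fix p assume "p \<in> {0..<L}"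
    then have p: "p < L" by simp
    have zz: "z = take p z @ z ! p # drop (Suc p) z" using p len by (simp add: id_take_nth_drop)
    have lt: "length (take p z) = p" using p len by simp
    have "(\<lambda>y. koszul_sign m (z ! p) (take p z) * delta (z ! p # take p z @ drop (Suc p) z, cyc (L - length (take p z)) L \<circ> \<tau>) y
              - delta (take p z @ z ! p # drop (Suc p) z, \<tau>) y) \<in> rel_span m n N L"
      by (rule move_to_front_congruent) (use assms zz in auto)
    then show "(\<lambda>y. koszul_sign m (z ! p) (take p z) * ?t p y - delta (z, \<tau>) y) \<in> rel_span m n N L"
      unfolding lt drop_at_def using zz[symmetric] by simp
  qed
  finally show ?thesis .
qed

definition number_op_defect :: "nat \<Rightarrow> nat \<Rightarrow> nat \<Rightarrow> vec \<Rightarrow> vec" where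
  "number_op_defect m n L f = (\<lambda>y. (\<Sum>a\<in>{1..m+n}. L_vec m n (basis_coeff a) (L_dual m n (basis_coeff a) f) y) - of_nat L * f y)"

lemma linop_number_op_defect: "linop (number_op_defect m n L)"
proof -
  have "linop (\<lambda>f y. (\<Sum>a\<in>{1..m+n}. 1 * (L_vec m n (basis_coeff a) \<circ> L_dual m n (basis_coeff a)) f y) - of_nat L * f y)"
    by (intro linop_minus linop_comb linop_smult linop_comp linop_L_vec linop_L_dual) auto
  then show ?thesis unfolding number_op_defect_def[abs_def] by simp
qed

lemma number_op_defect_rel:
  assumes "f \<in> free_tensors m n N L" "L \<le> N"
  shows "number_op_defect m n L f \<in> rel_span m n N L"
  by (rule linop_free_tensors_into[OF linop_number_op_defect csubspace_rel_span assms(1)])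
     (use number_op_defect_delta assms(2) in \<open>auto simp: number_op_defect_def\<close>)

fun word_op :: "nat \<Rightarrow> nat \<Rightarrow> nat list \<Rightarrow> vec \<Rightarrow> vec" where
  "word_op m n [] = id"
| "word_op m n (a # x) = L_vec m n (basis_coeff a) \<circ> word_op m n x \<circ> L_dual m n (basis_coeff a)"

definition words :: "nat \<Rightarrow> nat \<Rightarrow> nat \<Rightarrow> nat list set" where
  "words m n j = {x. set x \<subseteq> {1..m+n} \<and> length x = j}"

fun falling_fact :: "nat \<Rightarrow> nat \<Rightarrow> nat" where
  "falling_fact 0 L = 1"
| "falling_fact (Suc j) L = L * falling_fact j (L - 1)"

lemma falling_fact_self: "falling_fact j j = fact j"
  by (induction j) auto

lemma linop_word_op: "linop (word_op m n x)"
proof (induction x)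
  case (Cons a x)
  then show ?case by (simp only: word_op.simps) (intro linop_comp linop_L_vec linop_L_dual)
qed simp

lemma finite_words: "finite (words m n j)"
  unfolding words_def by (rule finite_lists_length_eq) simp

lemma words_Suc: "words m n (Suc j) = (\<lambda>(a, x). a # x) ` ({1..m+n} \<times> words m n j)"
  unfolding words_def by (auto simp: length_Suc_conv image_iff)

lemma sum_words_Suc:
  "(\<Sum>x\<in>words m n (Suc j). F x) = (\<Sum>a\<in>{1..m+n}. \<Sum>x\<in>words m n j. F (a # x))"
proof -
  have inj: "inj_on (\<lambda>(a, x). a # x) ({1..m+n} \<times> words m n j)" by (auto simp: inj_on_def)
  have "(\<Sum>x\<in>words m n (Suc j). F x) = (\<Sum>p\<in>{1..m+n} \<times> words m n j. F ((\<lambda>(a, x). a # x) p))"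
    unfolding words_Suc by (rule sum.reindex[OF inj, unfolded comp_def])
  also have "\<dots> = (\<Sum>a\<in>{1..m+n}. \<Sum>x\<in>words m n j. F (a # x))"
    by (simp add: sum.cartesian_product split_def)
  finally show ?thesis .
qed

lemma word_op_sum_congruent:
  assumes "j \<le> L" "L \<le> N" "f \<in> free_tensors m n N L"
  shows "(\<lambda>y. (\<Sum>x\<in>words m n j. word_op m n x f y) - of_nat (falling_fact j L) * f y) \<in> rel_span m n N L"
  using assms
proof (induction j arbitrary: L f)
  case 0
  have "words m n 0 = {[]}" unfolding words_def by auto
  then show ?case using csubspace_zero[OF csubspace_rel_span] by simp
next
  case (Suc j)
  define L' where "L' = L - 1"
  have L: "L = Suc L'" using Suc.prems unfolding L'_def by simp
  define g where "g a = L_dual m n (basis_coeff a) f" for a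
  have gFL: "g a \<in> free_tensors m n N L'" for a
    unfolding g_def L'_def by (rule L_dual_free_tensors[OF Suc.prems(3,2)])
  have gfs: "fin_supp (g a)" for a using free_tensors_fin_supp[OF gFL] .
  have IH: "(\<lambda>y. (\<Sum>x\<in>words m n j. word_op m n x (g a) y) - of_nat (falling_fact j L') * g a y) \<in> rel_span m n N L'" for a
    by (rule Suc.IH) (use Suc.prems L gFL in auto)
  have V1: "L_vec m n (basis_coeff a) (\<lambda>y. (\<Sum>x\<in>words m n j. word_op m n x (g a) y) - of_nat (falling_fact j L') * g a y)
      = (\<lambda>y. (\<Sum>x\<in>words m n j. L_vec m n (basis_coeff a) (word_op m n x (g a)) y) - of_nat (falling_fact j L') * L_vec m n (basis_coeff a) (g a) y)" for a
  proof -
    have fs: "fin_supp (\<lambda>y. \<Sum>x\<in>words m n j. word_op m n x (g a) y)"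
      using gfs by (intro fin_supp_sum finite_words) (auto intro: linop_fin_supp[OF linop_word_op])
    show ?thesis
      by (simp add: linop_diff[OF linop_L_vec fs] linop_scale[OF linop_L_vec] gfs
          linop_sum'[OF linop_L_vec finite_words] linop_fin_supp[OF linop_word_op])
  qed
  have V: "(\<lambda>y. \<Sum>a\<in>{1..m+n}. ((\<Sum>x\<in>words m n j. L_vec m n (basis_coeff a) (word_op m n x (g a)) y) - of_nat (falling_fact j L') * L_vec m n (basis_coeff a) (g a) y))
      \<in> rel_span m n N L"
  proof (rule csubspace_sum'[OF csubspace_rel_span], simp)
    fix a
    show "(\<lambda>y. (\<Sum>x\<in>words m n j. L_vec m n (basis_coeff a) (word_op m n x (g a)) y) - of_nat (falling_fact j L') * L_vec m n (basis_coeff a) (g a) y) \<in> rel_span m n N L"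
      using L_vec_rel_span[OF IH[of a], of "basis_coeff a"] unfolding V1 L by simp
  qed
  have W: "(\<lambda>y. of_nat (falling_fact j L') * number_op_defect m n L f y) \<in> rel_span m n N L"
    by (rule csubspace_scale[OF csubspace_rel_span number_op_defect_rel[OF Suc.prems(3,2)]])
  have E: "(\<lambda>y. (\<Sum>x\<in>words m n (Suc j). word_op m n x f y) - of_nat (falling_fact (Suc j) L) * f y)
     = (\<lambda>y. (\<Sum>a\<in>{1..m+n}. ((\<Sum>x\<in>words m n j. L_vec m n (basis_coeff a) (word_op m n x (g a)) y) - of_nat (falling_fact j L') * L_vec m n (basis_coeff a) (g a) y))
          + of_nat (falling_fact j L') * number_op_defect m n L f y)"
    unfolding sum_words_Suc number_op_defect_def g_def
    by (simp add: sum_subtractf sum_distrib_left algebra_simps L'_def)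
  show ?case unfolding E by (rule csubspace_add[OF csubspace_rel_span V W])
qed

lemma word_op_sum_fact_congruent:
  assumes "d \<le> N" "f \<in> free_tensors m n N d"
  shows "(\<lambda>y. (\<Sum>x\<in>words m n d. word_op m n x f y) - fact d * f y) \<in> rel_span m n N d"
  using word_op_sum_congruent[OF order_refl assms] unfolding falling_fact_self by simp

fun vec_word_op :: "nat \<Rightarrow> nat \<Rightarrow> nat list \<Rightarrow> vec \<Rightarrow> vec" where
  "vec_word_op m n [] = id"
| "vec_word_op m n (a # t) = L_vec m n (basis_coeff a) \<circ> vec_word_op m n t"

fun dual_word_op :: "nat \<Rightarrow> nat \<Rightarrow> nat list \<Rightarrow> vec \<Rightarrow> vec" where
  "dual_word_op m n [] = id"
| "dual_word_op m n (a # t) = dual_word_op m n t \<circ> L_dual m n (basis_coeff a)"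

lemma word_op_eq: "word_op m n x = vec_word_op m n x \<circ> dual_word_op m n x"
  by (induction x) (simp_all add: comp_assoc)

lemma linop_vec_word_op: "linop (vec_word_op m n x)"
  by (induction x) (simp_all only: vec_word_op.simps linop_id linop_comp linop_L_vec)

lemma dual_word_op_free_tensors: "f \<in> free_tensors m n N L \<Longrightarrow> L \<le> N \<Longrightarrow> dual_word_op m n x f \<in> free_tensors m n N (L - length x)"
proof (induction x arbitrary: f L)
  case Nil then show ?case by simp
next
  case (Cons a x)
  have "L_dual m n (basis_coeff a) f \<in> free_tensors m n N (L - 1)" by (rule L_dual_free_tensors[OF Cons.prems])
  then have "dual_word_op m n x (L_dual m n (basis_coeff a) f) \<in> free_tensors m n N (L - 1 - length x)"
    by (rule Cons.IH) (use Cons.prems in auto)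
  then show ?case by simp
qed

lemma vec_word_op_delta: "set x \<subseteq> {1..m+n} \<Longrightarrow> vec_word_op m n x (delta (u, \<pi>)) = delta (x @ u, \<pi>)"
  by (induction x) (auto simp: L_vec_basis_coeff_delta)

section \<open>The algebra generated by the operators\<close>

lemma foldr_comp_Cons: "foldr (\<circ>) (f # fs) id = f \<circ> foldr (\<circ>) fs id"
  by (simp add: fun_eq_iff)

lemma foldr_comp_Nil: "foldr (\<circ>) [] id = id" by simp

lemma foldr_comp_append: "foldr (\<circ>) (fs @ gs) id = foldr (\<circ>) fs id \<circ> foldr (\<circ>) gs id"
  by (induction fs) (simp_all add: foldr_comp_Cons comp_assoc)

lemma foldr_L_vec_props:
  fixes m n :: nat and w :: "nat \<Rightarrow> nat \<Rightarrow> complex"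
  defines "V js \<equiv> foldr (\<circ>) (map (\<lambda>j. L_vec m n (w j)) js) id"
  shows "linop (V js)"
    and "f \<in> free_tensors m n N L \<Longrightarrow> V js f \<in> free_tensors m n N (L + length js)"
    and "f \<in> rel_span m n N L \<Longrightarrow> V js f \<in> rel_span m n N (L + length js)"
    and "bij \<rho> \<Longrightarrow> fin_supp f \<Longrightarrow> V js (rtrans \<rho> f) = rtrans \<rho> (V js f)"
proof -
  show l: "linop (V js)" for js
    unfolding V_def by (induction js) (simp_all only: list.map foldr_comp_Cons foldr_comp_Nil linop_id linop_comp linop_L_vec)
  show "f \<in> free_tensors m n N L \<Longrightarrow> V js f \<in> free_tensors m n N (L + length js)"
    unfolding V_def by (induction js arbitrary: f) (auto intro!: L_vec_free_tensors)
  show "f \<in> rel_span m n N L \<Longrightarrow> V js f \<in> rel_span m n N (L + length js)"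
    unfolding V_def by (induction js arbitrary: f) (auto intro!: L_vec_rel_span)
  show "bij \<rho> \<Longrightarrow> fin_supp f \<Longrightarrow> V js (rtrans \<rho> f) = rtrans \<rho> (V js f)"
  proof (induction js)
    case Nil then show ?case by (simp add: V_def)
  next
    case (Cons j js)
    have "V (j # js) (rtrans \<rho> f) = L_vec m n (w j) (V js (rtrans \<rho> f))" unfolding V_def by simp
    also have "\<dots> = L_vec m n (w j) (rtrans \<rho> (V js f))" using Cons by simp
    also have "\<dots> = rtrans \<rho> (L_vec m n (w j) (V js f))"
      by (rule L_vec_rtrans) (use Cons linop_fin_supp[OF l] in auto)
    finally show ?case unfolding V_def by simp
  qed
qed

lemma foldr_L_dual_props:
  fixes m n :: nat and v :: "nat \<Rightarrow> nat \<Rightarrow> complex"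
  defines "D js \<equiv> foldr (\<circ>) (map (\<lambda>j. L_dual m n (v j)) js) id"
  shows "linop (D js)"
    and "f \<in> free_tensors m n N L \<Longrightarrow> L \<le> N \<Longrightarrow> D js f \<in> free_tensors m n N (L - length js)"
    and "f \<in> rel_span m n N L \<Longrightarrow> L \<le> N \<Longrightarrow> D js f \<in> rel_span m n N (L - length js)"
    and "bij \<rho> \<Longrightarrow> fin_supp f \<Longrightarrow> D js (rtrans \<rho> f) = rtrans \<rho> (D js f)"
proof -
  show l: "linop (D js)" for js
    unfolding D_def by (induction js) (simp_all only: list.map foldr_comp_Cons foldr_comp_Nil linop_id linop_comp linop_L_dual)
  show "f \<in> free_tensors m n N L \<Longrightarrow> L \<le> N \<Longrightarrow> D js f \<in> free_tensors m n N (L - length js)"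
  proof (induction js)
    case Nil then show ?case by (simp add: D_def)
  next
    case (Cons j js)
    have "D (j # js) f = L_dual m n (v j) (D js f)" unfolding D_def by simp
    moreover have "L_dual m n (v j) (D js f) \<in> free_tensors m n N (L - length js - 1)"
      by (rule L_dual_free_tensors) (use Cons in auto)
    ultimately show ?case by simp
  qed
  show "f \<in> rel_span m n N L \<Longrightarrow> L \<le> N \<Longrightarrow> D js f \<in> rel_span m n N (L - length js)"
  proof (induction js)
    case Nil then show ?case by (simp add: D_def)
  next
    case (Cons j js)
    have "D (j # js) f = L_dual m n (v j) (D js f)" unfolding D_def by simp
    moreover have "L_dual m n (v j) (D js f) \<in> rel_span m n N (L - length js - 1)"
      by (rule L_dual_rel_span) (use Cons in auto)
    ultimately show ?case by simp
  qed
  show "bij \<rho> \<Longrightarrow> fin_supp f \<Longrightarrow> D js (rtrans \<rho> f) = rtrans \<rho> (D js f)"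
  proof (induction js)
    case Nil then show ?case by (simp add: D_def)
  next
    case (Cons j js)
    have "D (j # js) (rtrans \<rho> f) = L_dual m n (v j) (D js (rtrans \<rho> f))" unfolding D_def by simp
    also have "\<dots> = L_dual m n (v j) (rtrans \<rho> (D js f))" using Cons by simp
    also have "\<dots> = rtrans \<rho> (L_dual m n (v j) (D js f))"
      by (rule L_dual_rtrans) (use Cons linop_fin_supp[OF l] in auto)
    finally show ?case unfolding D_def by simp
  qed
qed

definition gen_op :: "nat \<Rightarrow> nat \<Rightarrow> nat \<Rightarrow> (nat \<Rightarrow> nat \<Rightarrow> complex) \<Rightarrow> (nat \<Rightarrow> nat) \<Rightarrow> (nat \<Rightarrow> nat \<Rightarrow> complex) \<Rightarrow> vec \<Rightarrow> vec" where
  "gen_op m n d w \<rho> v = foldr (\<circ>)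
        (map (\<lambda>j. L_vec m n (w j)) (rev [1..<d+1]) @ [L_perm \<rho>] @ map (\<lambda>j. L_dual m n (v j)) [1..<d+1]) id"

lemma A_gens_gen_op: "A_gens m n d k = {gen_op m n d w \<rho> v | w \<rho> v. \<rho> permutes {1..d+k}}"
  unfolding A_gens_def gen_op_def by simp

lemma gen_op_split: "gen_op m n d w \<rho> v = foldr (\<circ>) (map (\<lambda>j. L_vec m n (w j)) (rev [1..<d+1])) id \<circ> L_perm \<rho>
      \<circ> foldr (\<circ>) (map (\<lambda>j. L_dual m n (v j)) [1..<d+1]) id"
  unfolding gen_op_def by (simp only: foldr_comp_append foldr_comp_Cons foldr_comp_Nil comp_id comp_assoc)

lemma gen_op_props:
  assumes "\<rho> permutes {1..N}" "d \<le> N"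
  shows "linop (gen_op m n d w \<rho> v)"
    and "f \<in> free_tensors m n N d \<Longrightarrow> gen_op m n d w \<rho> v f \<in> free_tensors m n N d"
    and "f \<in> rel_span m n N d \<Longrightarrow> gen_op m n d w \<rho> v f = (\<lambda>y. 0)"
    and "bij \<rho>' \<Longrightarrow> fin_supp f \<Longrightarrow> gen_op m n d w \<rho> v (rtrans \<rho>' f) = rtrans \<rho>' (gen_op m n d w \<rho> v f)"
proof -
  let ?V = "foldr (\<circ>) (map (\<lambda>j. L_vec m n (w j)) (rev [1..<d+1])) id"
  let ?D = "foldr (\<circ>) (map (\<lambda>j. L_dual m n (v j)) [1..<d+1]) id"
  have G: "gen_op m n d w \<rho> v f = ?V (L_perm \<rho> (?D f))" for f unfolding gen_op_split by simp
  show l: "linop (gen_op m n d w \<rho> v)" unfolding gen_op_split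
    by (intro linop_comp foldr_L_vec_props(1) foldr_L_dual_props(1) linop_L_perm)
  show "f \<in> free_tensors m n N d \<Longrightarrow> gen_op m n d w \<rho> v f \<in> free_tensors m n N d"
  proof -
    assume f: "f \<in> free_tensors m n N d"
    have "?D f \<in> free_tensors m n N (d - length [1..<d+1])" by (rule foldr_L_dual_props(2)[OF f assms(2)])
    then have "?D f \<in> free_tensors m n N 0" by simp
    then have "L_perm \<rho> (?D f) \<in> free_tensors m n N 0" by (rule L_perm_free_tensors[OF _ assms(1)])
    then have "?V (L_perm \<rho> (?D f)) \<in> free_tensors m n N (0 + length (rev [1..<d+1]))" by (rule foldr_L_vec_props(2))
    moreover have "0 + length (rev [1..<d+1]) = d" by simp
    ultimately show ?thesis unfolding G by (simp only:)
  qed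
  show "f \<in> rel_span m n N d \<Longrightarrow> gen_op m n d w \<rho> v f = (\<lambda>y. 0)"
  proof -
    assume f: "f \<in> rel_span m n N d"
    have "?D f \<in> rel_span m n N (d - length [1..<d+1])" by (rule foldr_L_dual_props(3)[OF f assms(2)])
    then have "?D f = (\<lambda>y. 0)" by (intro rel_span_degree0) simp
    then show ?thesis unfolding G
      using linop_zero[OF linop_L_perm] linop_zero[OF foldr_L_vec_props(1)] by simp
  qed
  show "bij \<rho>' \<Longrightarrow> fin_supp f \<Longrightarrow> gen_op m n d w \<rho> v (rtrans \<rho>' f) = rtrans \<rho>' (gen_op m n d w \<rho> v f)"
  proof -
    assume b: "bij \<rho>'" and f: "fin_supp f"
    have fs: "fin_supp (?D f)" by (rule linop_fin_supp[OF foldr_L_dual_props(1) f])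
    have "gen_op m n d w \<rho> v (rtrans \<rho>' f) = ?V (L_perm \<rho> (rtrans \<rho>' (?D f)))"
      unfolding G foldr_L_dual_props(4)[OF b f] ..
    also have "\<dots> = ?V (rtrans \<rho>' (L_perm \<rho> (?D f)))" by (simp only: L_perm_rtrans[OF b fs])
    also have "\<dots> = rtrans \<rho>' (?V (L_perm \<rho> (?D f)))"
      by (rule foldr_L_vec_props(4)[OF b]) (rule linop_fin_supp[OF linop_L_perm fs])
    finally show ?thesis unfolding G .
  qed
qed

definition rtrans_equivariant :: "nat \<Rightarrow> (vec \<Rightarrow> vec) \<Rightarrow> bool" where
  "rtrans_equivariant N T \<longleftrightarrow> (\<forall>\<rho> f. \<rho> \<in> perms N \<longrightarrow> fin_supp f \<longrightarrow> T (rtrans \<rho> f) = rtrans \<rho> (T f))"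

lemma rtrans_equivariant_R_mult:
  assumes "linop T" "rtrans_equivariant (d+k) T" "fin_supp f"
  shows "T (R_mult d k c f) = R_mult d k c (T f)"
proof -
  have "T (R_mult d k c f) = T (\<lambda>y. \<Sum>\<rho>\<in>perms (d+k). c \<rho> * rtrans \<rho> f y)" unfolding R_mult_rtrans[OF assms(3)] ..
  also have "\<dots> = (\<lambda>y. \<Sum>\<rho>\<in>perms (d+k). c \<rho> * T (rtrans \<rho> f) y)"
    by (rule linop_sum[OF assms(1) finite_perms]) (use assms(3) perms_bij fin_supp_rtrans in auto)
  also have "\<dots> = (\<lambda>y. \<Sum>\<rho>\<in>perms (d+k). c \<rho> * rtrans \<rho> (T f) y)"
    using assms(2,3) unfolding rtrans_equivariant_def by simp
  also have "\<dots> = R_mult d k c (T f)" unfolding R_mult_rtrans[OF linop_fin_supp[OF assms(1,3)]] ..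
  finally show ?thesis .
qed

lemma A_gens_props:
  assumes "g \<in> A_gens m n d k"
  shows "linop g" "f \<in> free_tensors m n (d+k) d \<Longrightarrow> g f \<in> free_tensors m n (d+k) d"
    "f \<in> rel_span m n (d+k) d \<Longrightarrow> g f = (\<lambda>y. 0)" "rtrans_equivariant (d+k) g"
proof -
  obtain w \<rho> v where g: "g = gen_op m n d w \<rho> v" "\<rho> permutes {1..d+k}"
    using assms unfolding A_gens_gen_op by blast
  have dN: "d \<le> d + k" by simp
  show "linop g" unfolding g(1) by (rule gen_op_props(1)[OF g(2) dN])
  show "f \<in> free_tensors m n (d+k) d \<Longrightarrow> g f \<in> free_tensors m n (d+k) d" unfolding g(1) by (rule gen_op_props(2)[OF g(2) dN])
  show "f \<in> rel_span m n (d+k) d \<Longrightarrow> g f = (\<lambda>y. 0)" unfolding g(1) by (rule gen_op_props(3)[OF g(2) dN])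
  show "rtrans_equivariant (d+k) g" unfolding rtrans_equivariant_def g(1) using gen_op_props(4)[OF g(2) dN] perms_bij by blast
qed

lemma A_alg_props:
  assumes "A \<in> A_alg m n d k"
  shows "linop A" "f \<in> free_tensors m n (d+k) d \<Longrightarrow> A f \<in> free_tensors m n (d+k) d"
    "f \<in> rel_span m n (d+k) d \<Longrightarrow> A f = (\<lambda>y. 0)" "rtrans_equivariant (d+k) A"
proof -
  obtain S c where S: "finite S" "S \<subseteq> A_gens m n d k" "A = (\<lambda>f y. \<Sum>g\<in>S. c g * g f y)"
    using assms unfolding A_alg_def cspan_op_def by blast
  have gp: "g \<in> S \<Longrightarrow> g \<in> A_gens m n d k" for g using S(2) by blast
  show "linop A" unfolding S(3) by (rule linop_comb[OF S(1)]) (use gp A_gens_props(1) in blast)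
  show "f \<in> free_tensors m n (d+k) d \<Longrightarrow> A f \<in> free_tensors m n (d+k) d"
    unfolding S(3) by (rule csubspace_sum[OF csubspace_free_tensors S(1)]) (use gp A_gens_props(2) in blast)
  show "f \<in> rel_span m n (d+k) d \<Longrightarrow> A f = (\<lambda>y. 0)"
  proof -
    assume f: "f \<in> rel_span m n (d+k) d"
    have "g f = (\<lambda>y. 0)" if "g \<in> S" for g using A_gens_props(3)[OF gp[OF that] f] .
    then show ?thesis unfolding S(3) by simp
  qed
  show "rtrans_equivariant (d+k) A" unfolding rtrans_equivariant_def
  proof (intro allI impI)
    fix \<rho> f assume \<rho>: "\<rho> \<in> perms (d+k)" and f: "fin_supp f"
    have "g (rtrans \<rho> f) = rtrans \<rho> (g f)" if "g \<in> S" for g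
      using A_gens_props(4)[OF gp[OF that]] \<rho> f unfolding rtrans_equivariant_def by blast
    then show "A (rtrans \<rho> f) = rtrans \<rho> (A f)" unfolding S(3) by (simp add: rtrans_sum rtrans_scale)
  qed
qed

lemma A_alg_endo_commutes:
  "\<forall>A\<in>A_alg m n d k. W_endo m n d k A \<and> (\<forall>c. W_commute m n d k A (R_mult d k c))"
proof (intro ballI conjI allI)
  fix A assume A: "A \<in> A_alg m n d k"
  show "W_endo m n d k A"
    by (rule W_endo_linop[OF A_alg_props(1)[OF A] A_alg_props(2)[OF A]])
       (simp_all add: A_alg_props(3)[OF A] csubspace_zero[OF csubspace_rel_span])
  fix c show "W_commute m n d k A (R_mult d k c)"
    by (rule W_commute_eq) (use rtrans_equivariant_R_mult[OF A_alg_props(1,4)[OF A]] free_tensors_fin_supp in auto)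
qed

lemma R_mult_endo_commutes:
  "\<forall>c. W_endo m n d k (R_mult d k c) \<and> (\<forall>A\<in>A_alg m n d k. W_commute m n d k (R_mult d k c) A)"
proof (intro allI ballI conjI)
  fix c
  show "W_endo m n d k (R_mult d k c)"
    by (rule W_endo_linop[OF linop_R_mult R_mult_free_tensors R_mult_rel_span])
  fix A assume A: "A \<in> A_alg m n d k"
  show "W_commute m n d k (R_mult d k c) A"
    by (rule W_commute_eq) (use rtrans_equivariant_R_mult[OF A_alg_props(1,4)[OF A]] free_tensors_fin_supp in auto)
qed

lemma foldr_L_vec_vec_word_op:
  "foldr (\<circ>) (map (\<lambda>j. L_vec m n (basis_coeff (xs ! (length xs - j)))) (rev [1..<length xs + 1])) id = vec_word_op m n xs"
proof (induction xs)
  case Nil then show ?case by simp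
next
  case (Cons a t)
  let ?L = "length t"
  have u: "[1..<length (a # t) + 1] = [1..<?L + 1] @ [Suc ?L]" by simp
  have m: "map (\<lambda>j. L_vec m n (basis_coeff ((a # t) ! (length (a # t) - j)))) (rev [1..<?L + 1])
      = map (\<lambda>j. L_vec m n (basis_coeff (t ! (?L - j)))) (rev [1..<?L + 1])"
  proof (rule map_cong[OF refl])
    fix j assume "j \<in> set (rev [1..<?L + 1])"
    then have "1 \<le> j" "j \<le> ?L" by auto
    then have "length (a # t) - j = Suc (?L - j)" by simp
    then show "L_vec m n (basis_coeff ((a # t) ! (length (a # t) - j))) = L_vec m n (basis_coeff (t ! (?L - j)))" by simp
  qed
  show ?case unfolding u rev_append
    by (simp only: list.map rev.simps append.simps foldr_comp_Cons m Cons.IH) simp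
qed

lemma foldr_L_dual_dual_word_op:
  "foldr (\<circ>) (map (\<lambda>j. L_dual m n (basis_coeff (xs ! (length xs - j)))) [1..<length xs + 1]) id = dual_word_op m n xs"
proof (induction xs)
  case Nil then show ?case by simp
next
  case (Cons a t)
  let ?L = "length t"
  have u: "[1..<length (a # t) + 1] = [1..<?L + 1] @ [Suc ?L]" by simp
  have m: "map (\<lambda>j. L_dual m n (basis_coeff ((a # t) ! (length (a # t) - j)))) [1..<?L + 1]
      = map (\<lambda>j. L_dual m n (basis_coeff (t ! (?L - j)))) [1..<?L + 1]"
  proof (rule map_cong[OF refl])
    fix j assume "j \<in> set [1..<?L + 1]"
    then have "1 \<le> j" "j \<le> ?L" by auto
    then have "length (a # t) - j = Suc (?L - j)" by simp
    then show "L_dual m n (basis_coeff ((a # t) ! (length (a # t) - j))) = L_dual m n (basis_coeff (t ! (?L - j)))" by simp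
  qed
  show ?case unfolding u map_append m Cons.IH foldr_comp_append
    by (simp add: foldr_comp_Cons)
qed

definition word_coeffs :: "nat \<Rightarrow> nat list \<Rightarrow> nat \<Rightarrow> nat \<Rightarrow> complex" where
  "word_coeffs d y = (\<lambda>j. basis_coeff (y ! (d - j)))"

lemma gen_op_word_coeffs:
  assumes "length y = d" "length x = d"
  shows "gen_op m n d (word_coeffs d y) \<sigma> (word_coeffs d x) = vec_word_op m n y \<circ> L_perm \<sigma> \<circ> dual_word_op m n x"
proof -
  have "foldr (\<circ>) (map (\<lambda>j. L_vec m n (word_coeffs d y j)) (rev [1..<d+1])) id = vec_word_op m n y"
    using foldr_L_vec_vec_word_op[of m n y] assms(1) unfolding word_coeffs_def by simp
  moreover have "foldr (\<circ>) (map (\<lambda>j. L_dual m n (word_coeffs d x j)) [1..<d+1]) id = dual_word_op m n x"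
    using foldr_L_dual_dual_word_op[of m n x] assms(2) unfolding word_coeffs_def by simp
  ultimately show ?thesis unfolding gen_op_split by simp
qed

lemma basis_idx_0: "basis_idx m n N 0 = (\<lambda>\<rho>. ([], \<rho>)) ` perms N"
  unfolding basis_idx_def perms_def by auto

lemma free_tensors_0_decomp:
  assumes "f \<in> free_tensors m n N 0"
  shows "f = (\<lambda>z. \<Sum>\<rho>\<in>perms N. f ([], \<rho>) * delta ([], \<rho>) z)"
proof -
  have "f = (\<lambda>y. \<Sum>x\<in>basis_idx m n N 0. f x * delta x y)" by (rule free_tensors_decomp[OF assms])
  also have "\<dots> = (\<lambda>z. \<Sum>\<rho>\<in>perms N. f ([], \<rho>) * delta ([], \<rho>) z)"
    unfolding basis_idx_0 by (subst sum.reindex) (auto simp: inj_on_def)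
  finally show ?thesis .
qed

lemma vec_word_op_degree0:
  assumes "\<beta> \<in> free_tensors m n N 0" "set x \<subseteq> {1..m+n}"
  shows "vec_word_op m n x \<beta> = (\<lambda>z. \<Sum>\<rho>\<in>perms N. \<beta> ([], \<rho>) * delta (x, \<rho>) z)"
proof -
  have "vec_word_op m n x \<beta> = vec_word_op m n x (\<lambda>z. \<Sum>\<rho>\<in>perms N. \<beta> ([], \<rho>) * delta ([], \<rho>) z)"
    by (rule arg_cong[OF free_tensors_0_decomp[OF assms(1)]])
  also have "\<dots> = (\<lambda>z. \<Sum>\<rho>\<in>perms N. \<beta> ([], \<rho>) * vec_word_op m n x (delta ([], \<rho>)) z)"
    by (rule linop_sum[OF linop_vec_word_op finite_perms]) simp
  also have "\<dots> = (\<lambda>z. \<Sum>\<rho>\<in>perms N. \<beta> ([], \<rho>) * delta (x, \<rho>) z)"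
    using vec_word_op_delta[OF assms(2)] by simp
  finally show ?thesis .
qed

lemma rtrans_expand:
  assumes "t \<in> free_tensors m n N L" "bij \<rho>"
  shows "rtrans \<rho> t = (\<lambda>z. \<Sum>g\<in>basis_idx m n N L. t g * delta (fst g, snd g \<circ> \<rho>) z)"
proof -
  have "rtrans \<rho> t = rtrans \<rho> (\<lambda>y. \<Sum>x\<in>basis_idx m n N L. t x * delta x y)" by (rule arg_cong[OF free_tensors_decomp[OF assms(1)]])
  also have "\<dots> = (\<lambda>z. \<Sum>g\<in>basis_idx m n N L. t g * delta (fst g, snd g \<circ> \<rho>) z)"
    unfolding rtrans_sum rtrans_scale
    by (intro ext sum.cong refl) (auto simp: rtrans_delta[OF assms(2)] split: prod.splits)
  finally show ?thesis .
qed

lemma vec_word_perm_expansion: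
  assumes "t \<in> free_tensors m n N L" "f0 \<in> free_tensors m n N 0"
  shows "(\<lambda>z. \<Sum>g\<in>basis_idx m n N L. t g * vec_word_op m n (fst g) (L_perm (snd g) f0) z)
       = (\<lambda>z. \<Sum>\<rho>\<in>perms N. f0 ([], \<rho>) * rtrans \<rho> t z)"
proof -
  have a: "vec_word_op m n (fst g) (L_perm (snd g) f0) = (\<lambda>z. \<Sum>\<rho>\<in>perms N. f0 ([], \<rho>) * delta (fst g, snd g \<circ> \<rho>) z)"
    if g: "g \<in> basis_idx m n N L" for g
  proof -
    have "vec_word_op m n (fst g) (L_perm (snd g) f0)
        = (vec_word_op m n (fst g) \<circ> L_perm (snd g)) (\<lambda>z. \<Sum>\<rho>\<in>perms N. f0 ([], \<rho>) * delta ([], \<rho>) z)"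
      using arg_cong[OF free_tensors_0_decomp[OF assms(2)], of "vec_word_op m n (fst g) \<circ> L_perm (snd g)"] by simp
    also have "\<dots> = (\<lambda>z. \<Sum>\<rho>\<in>perms N. f0 ([], \<rho>) * (vec_word_op m n (fst g) \<circ> L_perm (snd g)) (delta ([], \<rho>)) z)"
      by (rule linop_sum[OF linop_comp[OF linop_vec_word_op linop_L_perm] finite_perms]) simp
    also have "\<dots> = (\<lambda>z. \<Sum>\<rho>\<in>perms N. f0 ([], \<rho>) * delta (fst g, snd g \<circ> \<rho>) z)"
      using g by (intro ext sum.cong refl) (auto simp: basis_idx_def L_perm_delta0 vec_word_op_delta)
    finally show ?thesis .
  qed
  have "(\<lambda>z. \<Sum>g\<in>basis_idx m n N L. t g * vec_word_op m n (fst g) (L_perm (snd g) f0) z)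
     = (\<lambda>z. \<Sum>g\<in>basis_idx m n N L. \<Sum>\<rho>\<in>perms N. t g * (f0 ([], \<rho>) * delta (fst g, snd g \<circ> \<rho>) z))"
    by (intro ext sum.cong refl) (simp add: a sum_distrib_left)
  also have "\<dots> = (\<lambda>z. \<Sum>\<rho>\<in>perms N. f0 ([], \<rho>) * (\<Sum>g\<in>basis_idx m n N L. t g * delta (fst g, snd g \<circ> \<rho>) z))"
    by (subst sum.swap) (simp add: sum_distrib_left mult_ac)
  also have "\<dots> = (\<lambda>z. \<Sum>\<rho>\<in>perms N. f0 ([], \<rho>) * rtrans \<rho> t z)"
    by (intro ext sum.cong refl) (simp add: rtrans_expand[OF assms(1) perms_bij])
  finally show ?thesis .
qed

section \<open>The commutant of the symmetric group\<close>

lemma W_endo_rtrans_congruent: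
  assumes T: "W_endo m n d k T" and C: "\<forall>c. W_commute m n d k T (R_mult d k c)"
    and \<rho>: "\<rho> \<in> perms (d+k)" and f: "f \<in> free_tensors m n (d+k) d"
  shows "(\<lambda>y. T (rtrans \<rho> f) y - rtrans \<rho> (T f) y) \<in> rel_span m n (d+k) d"
proof -
  let ?c = "\<lambda>\<rho>'. if \<rho>' = \<rho> then 1 else 0"
  have "(\<lambda>y. T (R_mult d k ?c f) y - R_mult d k ?c (T f) y) \<in> rel_span m n (d+k) d"
    using C f unfolding W_commute_def W_eq_def W_free_free_tensors W_rel_rel_span by auto
  moreover have "R_mult d k ?c f = rtrans \<rho> f" "R_mult d k ?c (T f) = rtrans \<rho> (T f)"
    using R_mult_single \<rho> free_tensors_fin_supp f W_endo_props(1)[OF T f] by auto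
  ultimately show ?thesis by simp
qed

definition interpolant :: "nat \<Rightarrow> nat \<Rightarrow> nat \<Rightarrow> nat \<Rightarrow> (vec \<Rightarrow> vec) \<Rightarrow> vec \<Rightarrow> vec" where
  "interpolant m n d k T = (\<lambda>f y. \<Sum>p\<in>words m n d \<times> basis_idx m n (d+k) d.
     (T (delta (fst p, id)) (snd p) / fact d)
       * gen_op m n d (word_coeffs d (fst (snd p))) (snd (snd p)) (word_coeffs d (fst p)) f y)"

lemma interpolant_in_A_alg: "interpolant m n d k T \<in> A_alg m n d k"
  unfolding interpolant_def A_alg_def
proof (rule cspan_op_family)
  show "finite (words m n d \<times> basis_idx m n (d+k) d)" by (simp add: finite_words finite_basis_idx)
  fix p assume "p \<in> words m n d \<times> basis_idx m n (d+k) d"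
  then have "snd (snd p) permutes {1..d+k}" unfolding basis_idx_def by (auto split: prod.splits)
  then show "gen_op m n d (word_coeffs d (fst (snd p))) (snd (snd p)) (word_coeffs d (fst p)) \<in> A_gens m n d k"
    unfolding A_gens_gen_op by blast
qed

lemma words_basis_idx: "x \<in> words m n L \<Longrightarrow> \<rho> \<in> perms N \<Longrightarrow> (x, \<rho>) \<in> basis_idx m n N L"
  unfolding words_def basis_idx_def perms_def by auto

lemma dual_word_op_words_degree0:
  assumes "x \<in> words m n d" "f \<in> free_tensors m n N d" "d \<le> N"
  shows "dual_word_op m n x f \<in> free_tensors m n N 0"
  using dual_word_op_free_tensors[OF assms(2,3), of x] assms(1) unfolding words_def by simp

lemma word_op_expand:
  assumes "x \<in> words m n d" "f \<in> free_tensors m n N d" "d \<le> N"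
  shows "word_op m n x f = (\<lambda>z. \<Sum>\<rho>\<in>perms N. dual_word_op m n x f ([], \<rho>) * delta (x, \<rho>) z)"
  using vec_word_op_degree0[OF dual_word_op_words_degree0[OF assms]] assms(1)
  unfolding word_op_eq words_def by simp

lemma interpolant_apply:
  assumes T: "W_endo m n d k T" and f: "f \<in> free_tensors m n (d+k) d"
  shows "interpolant m n d k T f = (\<lambda>z. \<Sum>x\<in>words m n d. (1 / fact d) *
     (\<Sum>\<rho>\<in>perms (d+k). dual_word_op m n x f ([], \<rho>) * rtrans \<rho> (T (delta (x, id))) z))"
proof
  fix z
  let ?I = "basis_idx m n (d+k) d" and ?\<beta> = "\<lambda>x. dual_word_op m n x f"
  have gen: "gen_op m n d (word_coeffs d (fst g)) (snd g) (word_coeffs d x) f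
      = vec_word_op m n (fst g) (L_perm (snd g) (?\<beta> x))" if "x \<in> words m n d" "g \<in> ?I" for x g
    using that unfolding words_def basis_idx_def by (auto simp: gen_op_word_coeffs split: prod.splits)
  have Tx: "T (delta (x, id)) \<in> free_tensors m n (d+k) d" if "x \<in> words m n d" for x
    using that W_endo_props(1)[OF T] free_tensors_delta permutes_id
    unfolding words_def basis_idx_def by auto
  have "interpolant m n d k T f z = (\<Sum>x\<in>words m n d. \<Sum>g\<in>?I. (T (delta (x, id)) g / fact d)
      * gen_op m n d (word_coeffs d (fst g)) (snd g) (word_coeffs d x) f z)"
    unfolding interpolant_def by (simp add: sum.cartesian_product split_def)
  also have "\<dots> = (\<Sum>x\<in>words m n d. (1 / fact d) *
      (\<Sum>g\<in>?I. T (delta (x, id)) g * vec_word_op m n (fst g) (L_perm (snd g) (?\<beta> x)) z))"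
    by (intro sum.cong refl) (simp add: gen sum_distrib_left)
  also have "\<dots> = (\<Sum>x\<in>words m n d. (1 / fact d) *
      (\<Sum>\<rho>\<in>perms (d+k). ?\<beta> x ([], \<rho>) * rtrans \<rho> (T (delta (x, id))) z))"
  proof (intro sum.cong refl)
    fix x assume x: "x \<in> words m n d"
    show "(1 / fact d) * (\<Sum>g\<in>?I. T (delta (x, id)) g * vec_word_op m n (fst g) (L_perm (snd g) (?\<beta> x)) z)
      = (1 / fact d) * (\<Sum>\<rho>\<in>perms (d+k). ?\<beta> x ([], \<rho>) * rtrans \<rho> (T (delta (x, id))) z)"
      using vec_word_perm_expansion[OF Tx[OF x] dual_word_op_words_degree0[OF x f le_add1]] by metis
  qed
  finally show "interpolant m n d k T f z = \<dots>" .
qed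

lemma W_endo_word_op_congruent:
  assumes T: "W_endo m n d k T" and C: "\<forall>c. W_commute m n d k T (R_mult d k c)"
    and x: "x \<in> words m n d" and f: "f \<in> free_tensors m n (d+k) d"
  shows "(\<lambda>z. T (word_op m n x f) z - (\<Sum>\<rho>\<in>perms (d+k).
      dual_word_op m n x f ([], \<rho>) * rtrans \<rho> (T (delta (x, id))) z)) \<in> rel_span m n (d+k) d"
proof -
  have xI: "(x, \<rho>) \<in> basis_idx m n (d+k) d" if "\<rho> \<in> perms (d+k)" for \<rho>
    by (rule words_basis_idx[OF x that])
  have idP: "id \<in> perms (d+k)" unfolding perms_def by (simp add: permutes_id)
  have "T (word_op m n x f)
      = (\<lambda>z. \<Sum>\<rho>\<in>perms (d+k). dual_word_op m n x f ([], \<rho>) * T (rtrans \<rho> (delta (x, id))) z)"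
    unfolding word_op_expand[OF x f le_add1]
    by (subst W_endo_sum[OF T finite_perms])
       (auto intro: free_tensors_delta xI simp: rtrans_delta perms_bij)
  then have "(\<lambda>z. T (word_op m n x f) z - (\<Sum>\<rho>\<in>perms (d+k).
      dual_word_op m n x f ([], \<rho>) * rtrans \<rho> (T (delta (x, id))) z))
    = (\<lambda>z. \<Sum>\<rho>\<in>perms (d+k). dual_word_op m n x f ([], \<rho>)
        * (T (rtrans \<rho> (delta (x, id))) z - rtrans \<rho> (T (delta (x, id))) z))"
    by (simp add: sum_subtractf algebra_simps)
  also have "\<dots> \<in> rel_span m n (d+k) d"
    by (rule csubspace_sum[OF csubspace_rel_span finite_perms W_endo_rtrans_congruent[OF T C]])
       (use free_tensors_delta[OF xI[OF idP]] in auto)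
  finally show ?thesis .
qed

lemma W_endo_commutant_interpolant:
  assumes T: "W_endo m n d k T" and C: "\<forall>c. W_commute m n d k T (R_mult d k c)"
  shows "W_eq m n d k T (interpolant m n d k T)"
  unfolding W_eq_def W_free_free_tensors W_rel_rel_span
proof
  let ?R = "rel_span m n (d+k) d"
  fix f assume f: "f \<in> free_tensors m n (d+k) d"
  define K where "K x = (\<lambda>z. \<Sum>\<rho>\<in>perms (d+k).
    dual_word_op m n x f ([], \<rho>) * rtrans \<rho> (T (delta (x, id))) z)" for x
  have NF: "word_op m n x f \<in> free_tensors m n (d+k) d" if "x \<in> words m n d" for x
    unfolding word_op_expand[OF that f le_add1]
    by (rule csubspace_sum[OF csubspace_free_tensors finite_perms])
       (use that words_basis_idx free_tensors_delta in blast)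
  have sumF: "(\<lambda>y. \<Sum>x\<in>words m n d. word_op m n x f y) \<in> free_tensors m n (d+k) d"
    by (rule csubspace_sum'[OF csubspace_free_tensors finite_words NF])
  have "T (\<lambda>y. (\<Sum>x\<in>words m n d. word_op m n x f y) - fact d * f y) \<in> ?R"
    by (rule W_endo_props(4)[OF T word_op_sum_fact_congruent[OF le_add1 f]])
  also have "T (\<lambda>y. (\<Sum>x\<in>words m n d. word_op m n x f y) - fact d * f y)
      = (\<lambda>y. (\<Sum>x\<in>words m n d. T (word_op m n x f) y) - fact d * T f y)"
    using W_endo_sum[OF T finite_words NF, where c="\<lambda>_. 1"]
    by (simp add: W_endo_diff[OF T sumF free_tensors_scale[OF f]] W_endo_props(3)[OF T f])
  finally have sum_congr: "(\<lambda>y. (\<Sum>x\<in>words m n d. T (word_op m n x f) y) - fact d * T f y) \<in> ?R" .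
  have K_congr: "(\<lambda>y. \<Sum>x\<in>words m n d. T (word_op m n x f) y - K x y) \<in> ?R"
    unfolding K_def
    by (rule csubspace_sum'[OF csubspace_rel_span finite_words W_endo_word_op_congruent[OF T C _ f]])
  have "(\<lambda>y. T f y - interpolant m n d k T f y) = (\<lambda>y. (1 / fact d) *
      ((\<Sum>x\<in>words m n d. T (word_op m n x f) y - K x y)
       - ((\<Sum>x\<in>words m n d. T (word_op m n x f) y) - fact d * T f y)))"
    unfolding interpolant_apply[OF T f] K_def
    by (intro ext) (simp add: sum_subtractf sum_distrib_left sum_divide_distrib[symmetric] field_simps)
  also have "\<dots> \<in> ?R"
    by (rule csubspace_scale[OF csubspace_rel_span csubspace_diff[OF csubspace_rel_span K_congr sum_congr]])
  finally show "(\<lambda>y. T f y - interpolant m n d k T f y) \<in> ?R" .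
qed

lemma R_mult_commutant_in_A_alg:
  assumes "W_endo m n d k T" "\<forall>c. W_commute m n d k T (R_mult d k c)"
  shows "\<exists>A\<in>A_alg m n d k. W_eq m n d k T A"
  using interpolant_in_A_alg W_endo_commutant_interpolant[OF assms] by blast

section \<open>The commutant of the algebra\<close>

definition fam_scale :: "complex \<Rightarrow> (idx \<Rightarrow> vec) \<Rightarrow> (idx \<Rightarrow> vec)" where
  "fam_scale c \<Phi> = (\<lambda>i y. c * \<Phi> i y)"

lemma plus_fam_apply: "(\<Phi> + \<Psi>) i y = \<Phi> i y + (\<Psi> :: idx \<Rightarrow> vec) i y"
  by (simp add: plus_fun_def)

interpretation fam: vector_space fam_scale
  by unfold_locales (simp_all add: fam_scale_def fun_eq_iff plus_fam_apply algebra_simps)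

interpretation fam_pair: vector_space_pair fam_scale fam_scale ..

lemma fam_subspace_projection_exists:
  assumes "fam.subspace Z"
  shows "\<exists>g. (\<forall>x y. g (x + y) = g x + g y) \<and> (\<forall>c x. g (fam_scale c x) = fam_scale c (g x)) \<and> (\<forall>x. g x \<in> Z) \<and> (\<forall>z\<in>Z. g z = z)"
proof -
  obtain B where B: "B \<subseteq> Z" "fam.independent B" "Z \<subseteq> fam.span B"
    by (rule fam.maximal_independent_subset[of Z]) blast
  obtain g where g: "Vector_Spaces.linear fam_scale fam_scale g" "\<forall>x\<in>B. g x = id x" "range g = fam.span (id ` B)"
    using fam_pair.linear_independent_extend_subspace[OF B(2), of id] by blast
  have spanB: "fam.span B = Z" by (rule fam.span_subspace[OF B(1) B(3) assms])
  have lid: "Vector_Spaces.linear fam_scale fam_scale id" using fam.module_hom_id by (simp add: module_hom_iff_linear)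
  have fixz: "g z = z" if "z \<in> Z" for z
    using fam_pair.linear_eq_on[OF g(1) lid, of z B] that g(2) spanB by auto
  have rng: "g x \<in> Z" for x using g(3) spanB by auto
  show ?thesis using g(1) fixz rng unfolding Vector_Spaces.linear_iff by blast
qed

definition fam_space :: "nat \<Rightarrow> nat \<Rightarrow> nat \<Rightarrow> nat \<Rightarrow> (idx \<Rightarrow> vec) set" where
  "fam_space m n d k = {\<Phi>. (\<forall>i. \<Phi> i \<in> free_tensors m n (d+k) d) \<and> (\<forall>i. i \<notin> basis_idx m n (d+k) d \<longrightarrow> \<Phi> i = (\<lambda>y. 0))}"

text \<open>Families indexed by the basis tensors \<open>i\<close> model \<open>W\<^sup>I\<close>. The families \<open>(e\<^sub>i . b)\<^sub>i\<close>,
  \<open>b \<in> \<complex>\<frakS>\<^sub>d\<^sub>+\<^sub>k\<close>, taken modulo relations, form the submodule generated by the basis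
  family \<open>(e\<^sub>i)\<^sub>i\<close>.\<close>

definition R_mult_fams :: "nat \<Rightarrow> nat \<Rightarrow> nat \<Rightarrow> nat \<Rightarrow> (idx \<Rightarrow> vec) set" where
  "R_mult_fams m n d k = {\<Phi>. \<Phi> \<in> fam_space m n d k \<and> (\<exists>b. \<forall>i\<in>basis_idx m n (d+k) d.
      (\<lambda>y. \<Phi> i y - R_mult d k b (delta i) y) \<in> rel_span m n (d+k) d)}"

definition fam_rtrans :: "(nat \<Rightarrow> nat) \<Rightarrow> (idx \<Rightarrow> vec) \<Rightarrow> (idx \<Rightarrow> vec)" where
  "fam_rtrans \<rho> \<Phi> = (\<lambda>i. rtrans \<rho> (\<Phi> i))"

lemma R_mult_fams_subspace: "fam.subspace (R_mult_fams m n d k)"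
proof (rule fam.subspaceI)
  show "0 \<in> R_mult_fams m n d k"
    unfolding R_mult_fams_def fam_space_def
    using csubspace_zero[OF csubspace_rel_span] R_mult_zero[OF free_tensors_fin_supp[OF free_tensors_delta]]
    by (auto simp: zero_fun_def intro!: exI[of _ "\<lambda>\<rho>. 0"])
next
  fix x y assume x: "x \<in> R_mult_fams m n d k" and y: "y \<in> R_mult_fams m n d k"
  obtain b1 where b1: "\<forall>i\<in>basis_idx m n (d+k) d. (\<lambda>z. x i z - R_mult d k b1 (delta i) z) \<in> rel_span m n (d+k) d"
    using x unfolding R_mult_fams_def by blast
  obtain b2 where b2: "\<forall>i\<in>basis_idx m n (d+k) d. (\<lambda>z. y i z - R_mult d k b2 (delta i) z) \<in> rel_span m n (d+k) d"
    using y unfolding R_mult_fams_def by blast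
  have "(\<lambda>z. (x + y) i z - R_mult d k (\<lambda>\<rho>. b1 \<rho> + b2 \<rho>) (delta i) z) \<in> rel_span m n (d+k) d"
    if i: "i \<in> basis_idx m n (d+k) d" for i
  proof -
    have "(\<lambda>z. (x + y) i z - R_mult d k (\<lambda>\<rho>. b1 \<rho> + b2 \<rho>) (delta i) z)
        = (\<lambda>z. (x i z - R_mult d k b1 (delta i) z) + (y i z - R_mult d k b2 (delta i) z))"
      by (simp add: R_mult_add plus_fam_apply algebra_simps)
    then show ?thesis using csubspace_add[OF csubspace_rel_span] b1 b2 i by simp
  qed
  moreover have "x + y \<in> fam_space m n d k" using x y unfolding R_mult_fams_def fam_space_def
    by (auto simp: plus_fun_def intro: free_tensors_add)
  ultimately show "x + y \<in> R_mult_fams m n d k" unfolding R_mult_fams_def by blast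
next
  fix c x assume x: "x \<in> R_mult_fams m n d k"
  obtain b1 where b1: "\<forall>i\<in>basis_idx m n (d+k) d. (\<lambda>z. x i z - R_mult d k b1 (delta i) z) \<in> rel_span m n (d+k) d"
    using x unfolding R_mult_fams_def by blast
  have "(\<lambda>z. fam_scale c x i z - R_mult d k (\<lambda>\<rho>. c * b1 \<rho>) (delta i) z) \<in> rel_span m n (d+k) d"
    if i: "i \<in> basis_idx m n (d+k) d" for i
  proof -
    have "(\<lambda>z. fam_scale c x i z - R_mult d k (\<lambda>\<rho>. c * b1 \<rho>) (delta i) z)
        = (\<lambda>z. c * (x i z - R_mult d k b1 (delta i) z))"
      by (simp add: R_mult_scale fam_scale_def algebra_simps)
    then show ?thesis using csubspace_scale[OF csubspace_rel_span] b1 i by simp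
  qed
  moreover have "fam_scale c x \<in> fam_space m n d k" using x unfolding R_mult_fams_def fam_space_def fam_scale_def
    by (auto intro: free_tensors_scale)
  ultimately show "fam_scale c x \<in> R_mult_fams m n d k" unfolding R_mult_fams_def by blast
qed

lemma R_mult_fams_fam_rtrans: assumes "\<Phi> \<in> R_mult_fams m n d k" "\<rho> \<in> perms (d+k)" shows "fam_rtrans \<rho> \<Phi> \<in> R_mult_fams m n d k"
proof -
  obtain b where b: "\<forall>i\<in>basis_idx m n (d+k) d. (\<lambda>z. \<Phi> i z - R_mult d k b (delta i) z) \<in> rel_span m n (d+k) d"
    and fam_space: "\<Phi> \<in> fam_space m n d k"
    using assms(1) unfolding R_mult_fams_def by blast
  have "fam_rtrans \<rho> \<Phi> \<in> fam_space m n d k"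
    using fam_space assms(2) unfolding fam_space_def fam_rtrans_def by (auto intro: free_tensors_rtrans)
  moreover have "(\<lambda>z. fam_rtrans \<rho> \<Phi> i z - R_mult d k (\<lambda>\<sigma>. b (\<sigma> \<circ> inv \<rho>)) (delta i) z) \<in> rel_span m n (d+k) d"
    if i: "i \<in> basis_idx m n (d+k) d" for i
  proof -
    have "(\<lambda>z. fam_rtrans \<rho> \<Phi> i z - R_mult d k (\<lambda>\<sigma>. b (\<sigma> \<circ> inv \<rho>)) (delta i) z)
        = rtrans \<rho> (\<lambda>z. \<Phi> i z - R_mult d k b (delta i) z)"
      unfolding fam_rtrans_def rtrans_diff rtrans_R_mult[OF assms(2) fin_supp_delta] ..
    then show ?thesis using rtrans_rel_span[OF assms(2)] b i by simp
  qed
  ultimately show ?thesis unfolding R_mult_fams_def by blast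
qed

lemma R_mult_fams_fam_space: "\<Phi> \<in> R_mult_fams m n d k \<Longrightarrow> \<Phi> \<in> fam_space m n d k" unfolding R_mult_fams_def by blast

lemma fam_rtrans_add: "fam_rtrans \<rho> (\<lambda>i y. A i y + B i y) = (\<lambda>i y. fam_rtrans \<rho> A i y + fam_rtrans \<rho> B i y)"
  unfolding fam_rtrans_def by (simp add: rtrans_add)

lemma fam_rtrans_scale: "fam_rtrans \<rho> (fam_scale c A) = fam_scale c (fam_rtrans \<rho> A)"
  unfolding fam_rtrans_def fam_scale_def by (simp add: rtrans_scale)

lemma fam_rtrans_fam_rtrans: "bij \<rho> \<Longrightarrow> bij \<tau> \<Longrightarrow> fam_rtrans \<rho> (fam_rtrans \<tau> A) = fam_rtrans (\<tau> \<circ> \<rho>) A"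
  unfolding fam_rtrans_def by (simp add: rtrans_rtrans)

lemma R_mult_fams_sum: "finite S \<Longrightarrow> (\<And>j. j \<in> S \<Longrightarrow> H j \<in> R_mult_fams m n d k) \<Longrightarrow> (\<lambda>i y. \<Sum>j\<in>S. H j i y) \<in> R_mult_fams m n d k"
proof (induction S rule: finite_induct)
  case empty
  then show ?case using fam.subspace_0[OF R_mult_fams_subspace] by (simp add: zero_fun_def)
next
  case (insert x F)
  have "H x + (\<lambda>i y. \<Sum>j\<in>F. H j i y) \<in> R_mult_fams m n d k"
    using insert by (intro fam.subspace_add[OF R_mult_fams_subspace]) auto
  moreover have "H x + (\<lambda>i y. \<Sum>j\<in>F. H j i y) = (\<lambda>i y. \<Sum>j\<in>insert x F. H j i y)"
    using insert by (simp add: fun_eq_iff plus_fam_apply)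
  ultimately show ?case by simp
qed

lemma fam_rtrans_zero: "fam_rtrans \<rho> (\<lambda>i y. 0) = (\<lambda>i y. 0)" unfolding fam_rtrans_def by simp

text \<open>Averaging any linear projection onto \<open>R_mult_fams\<close> over \<open>\<frakS>\<^sub>d\<^sub>+\<^sub>k\<close> gives an equivariant
  projection (Maschke).\<close>

locale R_mult_fams_projection =
  fixes m n d k :: nat and proj :: "(idx \<Rightarrow> vec) \<Rightarrow> (idx \<Rightarrow> vec)"
  assumes proj_add: "\<And>x y. proj (x + y) = proj x + proj y"
    and proj_scale: "\<And>c x. proj (fam_scale c x) = fam_scale c (proj x)"
    and proj_range: "\<And>x. proj x \<in> R_mult_fams m n d k"
    and proj_fixes: "\<And>z. z \<in> R_mult_fams m n d k \<Longrightarrow> proj z = z"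
begin

abbreviation "N \<equiv> d + k"
abbreviation "I \<equiv> basis_idx m n (d+k) d"

definition avg_weight :: complex where "avg_weight = 1 / of_nat (card (perms N))"

definition avg_proj :: "(idx \<Rightarrow> vec) \<Rightarrow> (idx \<Rightarrow> vec)" where
  "avg_proj \<Phi> = (\<lambda>i y. avg_weight * (\<Sum>\<rho>\<in>perms N. fam_rtrans (inv \<rho>) (proj (fam_rtrans \<rho> \<Phi>)) i y))"

lemma proj_add_pointwise: "proj (\<lambda>i y. A i y + B i y) = (\<lambda>i y. proj A i y + proj B i y)"
proof -
  have e: "(\<lambda>i y. A i y + B i y) = A + B" by (simp add: fun_eq_iff plus_fam_apply)
  show ?thesis unfolding e proj_add by (simp add: fun_eq_iff plus_fam_apply)
qed

lemma proj_zero: "proj (\<lambda>i y. 0) = (\<lambda>i y. 0)"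
proof -
  have "fam_scale 0 (\<lambda>i y. 0) = (\<lambda>i y. 0)" by (simp add: fam_scale_def)
  then show ?thesis using proj_scale[of 0 "\<lambda>i y. 0"] by (simp add: fam_scale_def)
qed

lemma avg_proj_add: "avg_proj (\<lambda>i y. A i y + B i y) = (\<lambda>i y. avg_proj A i y + avg_proj B i y)"
  unfolding avg_proj_def fam_rtrans_add proj_add_pointwise by (simp add: sum.distrib ring_distribs)

lemma avg_proj_scale: "avg_proj (fam_scale c A) = fam_scale c (avg_proj A)"
  unfolding avg_proj_def fam_rtrans_scale proj_scale by (simp add: fam_scale_def fam_rtrans_def rtrans_scale sum_distrib_left mult_ac)

lemma avg_proj_scale': "avg_proj (\<lambda>i y. c * A i y) = (\<lambda>i y. c * avg_proj A i y)"
  using avg_proj_scale[of c A] unfolding fam_scale_def .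

lemma avg_proj_zero: "avg_proj (\<lambda>i y. 0) = (\<lambda>i y. 0)"
  unfolding avg_proj_def fam_rtrans_zero proj_zero by simp

lemma avg_proj_sum: "finite J \<Longrightarrow> avg_proj (\<lambda>i y. \<Sum>j\<in>J. H j i y) = (\<lambda>i y. \<Sum>j\<in>J. avg_proj (H j) i y)"
proof (induction J rule: finite_induct)
  case empty then show ?case using avg_proj_zero by simp
next
  case (insert x F)
  have "avg_proj (\<lambda>i y. \<Sum>j\<in>insert x F. H j i y) = avg_proj (\<lambda>i y. H x i y + (\<lambda>i y. \<Sum>j\<in>F. H j i y) i y)"
    using insert by simp
  also have "\<dots> = (\<lambda>i y. avg_proj (H x) i y + avg_proj (\<lambda>i y. \<Sum>j\<in>F. H j i y) i y)" by (rule avg_proj_add)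
  finally show ?case using insert by simp
qed

lemma avg_proj_in_R_mult_fams: "avg_proj \<Phi> \<in> R_mult_fams m n d k"
proof -
  have "(\<lambda>i y. \<Sum>\<rho>\<in>perms N. fam_rtrans (inv \<rho>) (proj (fam_rtrans \<rho> \<Phi>)) i y) \<in> R_mult_fams m n d k"
    by (rule R_mult_fams_sum[OF finite_perms]) (auto intro: R_mult_fams_fam_rtrans proj_range inv_perms)
  then have "fam_scale avg_weight (\<lambda>i y. \<Sum>\<rho>\<in>perms N. fam_rtrans (inv \<rho>) (proj (fam_rtrans \<rho> \<Phi>)) i y) \<in> R_mult_fams m n d k"
    by (rule fam.subspace_scale[OF R_mult_fams_subspace])
  then show ?thesis unfolding avg_proj_def fam_scale_def .
qed

lemma avg_proj_fixes: assumes "\<Phi> \<in> R_mult_fams m n d k" shows "avg_proj \<Phi> = \<Phi>"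
proof -
  have "fam_rtrans (inv \<rho>) (proj (fam_rtrans \<rho> \<Phi>)) = \<Phi>" if \<rho>: "\<rho> \<in> perms N" for \<rho>
  proof -
    have "proj (fam_rtrans \<rho> \<Phi>) = fam_rtrans \<rho> \<Phi>" by (rule proj_fixes[OF R_mult_fams_fam_rtrans[OF assms \<rho>]])
    moreover have "fam_rtrans (inv \<rho>) (fam_rtrans \<rho> \<Phi>) = fam_rtrans (\<rho> \<circ> inv \<rho>) \<Phi>"
      by (rule fam_rtrans_fam_rtrans) (use \<rho> inv_perms perms_bij in auto)
    moreover have "\<rho> \<circ> inv \<rho> = id" using \<rho> unfolding perms_def by (simp add: permutes_inv_o)
    ultimately show ?thesis by (simp add: fam_rtrans_def)
  qed
  then have "avg_proj \<Phi> = (\<lambda>i y. avg_weight * (\<Sum>\<rho>\<in>perms N. \<Phi> i y))" unfolding avg_proj_def by simp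
  also have "\<dots> = \<Phi>" using card_perms by (simp add: avg_weight_def fun_eq_iff)
  finally show ?thesis .
qed

lemma avg_proj_fam_rtrans: assumes \<tau>: "\<tau> \<in> perms N" shows "avg_proj (fam_rtrans \<tau> \<Phi>) = fam_rtrans \<tau> (avg_proj \<Phi>)"
proof -
  have bt: "bij \<tau>" using perms_bij[OF \<tau>] .
  have "(\<Sum>\<rho>\<in>perms N. fam_rtrans (inv \<rho>) (proj (fam_rtrans \<rho> (fam_rtrans \<tau> \<Phi>))) i y)
      = (\<Sum>\<sigma>\<in>perms N. fam_rtrans \<tau> (fam_rtrans (inv \<sigma>) (proj (fam_rtrans \<sigma> \<Phi>))) i y)" for i y
  proof (rule sum.reindex_bij_witness[of _ "\<lambda>\<sigma>. inv \<tau> \<circ> \<sigma>" "\<lambda>\<rho>. \<tau> \<circ> \<rho>"])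
    fix \<rho> assume \<rho>: "\<rho> \<in> perms N"
    show "inv \<tau> \<circ> (\<tau> \<circ> \<rho>) = \<rho>" using \<tau> unfolding perms_def by (simp add: comp_assoc[symmetric] permutes_inv_o)
    show "\<tau> \<circ> \<rho> \<in> perms N" using \<tau> \<rho> unfolding perms_def by (auto intro: permutes_compose)
    have b\<rho>: "bij \<rho>" using perms_bij[OF \<rho>] .
    have e1: "fam_rtrans \<rho> (fam_rtrans \<tau> \<Phi>) = fam_rtrans (\<tau> \<circ> \<rho>) \<Phi>" by (rule fam_rtrans_fam_rtrans[OF b\<rho> bt])
    have e2: "fam_rtrans \<tau> (fam_rtrans (inv (\<tau> \<circ> \<rho>)) X) = fam_rtrans (inv \<rho>) X" for X
    proof -
      have "bij (inv (\<tau> \<circ> \<rho>))" using bt b\<rho> by (simp add: bij_comp bij_imp_bij_inv)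
      then have "fam_rtrans \<tau> (fam_rtrans (inv (\<tau> \<circ> \<rho>)) X) = fam_rtrans (inv (\<tau> \<circ> \<rho>) \<circ> \<tau>) X" by (rule fam_rtrans_fam_rtrans[OF bt])
      moreover have "inv (\<tau> \<circ> \<rho>) \<circ> \<tau> = inv \<rho>"
        using bt b\<rho> by (simp add: o_inv_distrib comp_assoc bij_is_inj inv_o_cancel)
      ultimately show ?thesis by simp
    qed
    show "fam_rtrans \<tau> (fam_rtrans (inv (\<tau> \<circ> \<rho>)) (proj (fam_rtrans (\<tau> \<circ> \<rho>) \<Phi>))) i y = fam_rtrans (inv \<rho>) (proj (fam_rtrans \<rho> (fam_rtrans \<tau> \<Phi>))) i y"
      unfolding e1 e2 ..
  next
    fix \<sigma> assume \<sigma>: "\<sigma> \<in> perms N"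
    show "\<tau> \<circ> (inv \<tau> \<circ> \<sigma>) = \<sigma>" using \<tau> unfolding perms_def by (simp add: comp_assoc[symmetric] permutes_inv_o)
    show "inv \<tau> \<circ> \<sigma> \<in> perms N" using \<tau> \<sigma> unfolding perms_def by (auto intro: permutes_compose permutes_inv)
  qed
  then have "avg_proj (fam_rtrans \<tau> \<Phi>) = (\<lambda>i y. avg_weight * (\<Sum>\<sigma>\<in>perms N. fam_rtrans \<tau> (fam_rtrans (inv \<sigma>) (proj (fam_rtrans \<sigma> \<Phi>))) i y))"
    unfolding avg_proj_def by simp
  also have "\<dots> = fam_rtrans \<tau> (avg_proj \<Phi>)"
    unfolding avg_proj_def fam_rtrans_def rtrans_scale rtrans_sum by simp
  finally show ?thesis .
qed

definition single_fam :: "idx \<Rightarrow> vec \<Rightarrow> (idx \<Rightarrow> vec)" where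
  "single_fam j f = (\<lambda>i. if i = j then f else (\<lambda>y. 0))"

definition proj_entry :: "idx \<Rightarrow> idx \<Rightarrow> vec \<Rightarrow> vec" where
  "proj_entry i j f = avg_proj (single_fam j f) i"

lemma proj_entry_free_tensors: "proj_entry i j f \<in> free_tensors m n N d"
  using R_mult_fams_fam_space[OF avg_proj_in_R_mult_fams] unfolding proj_entry_def fam_space_def by blast

lemma linop_proj_entry: "linop (proj_entry i j)"
  unfolding linop_def
proof (intro conjI allI impI)
  fix f show "fin_supp (proj_entry i j f)" by (rule free_tensors_fin_supp[OF proj_entry_free_tensors])
next
  fix f h :: vec
  have "single_fam j (\<lambda>y. f y + h y) = (\<lambda>i y. single_fam j f i y + single_fam j h i y)" unfolding single_fam_def by auto
  then show "proj_entry i j (\<lambda>y. f y + h y) = (\<lambda>y. proj_entry i j f y + proj_entry i j h y)"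
    unfolding proj_entry_def using avg_proj_add by simp
next
  fix f :: vec and c
  have "single_fam j (\<lambda>y. c * f y) = (\<lambda>i y. c * single_fam j f i y)" unfolding single_fam_def by auto
  then show "proj_entry i j (\<lambda>y. c * f y) = (\<lambda>y. c * proj_entry i j f y)"
    unfolding proj_entry_def using avg_proj_scale' by simp
qed

lemma rtrans_equivariant_proj_entry: "rtrans_equivariant N (proj_entry i j)"
  unfolding rtrans_equivariant_def
proof (intro allI impI)
  fix \<rho> f assume \<rho>: "\<rho> \<in> perms N"
  have "single_fam j (rtrans \<rho> f) = fam_rtrans \<rho> (single_fam j f)" unfolding single_fam_def fam_rtrans_def by auto
  then show "proj_entry i j (rtrans \<rho> f) = rtrans \<rho> (proj_entry i j f)"
    unfolding proj_entry_def using avg_proj_fam_rtrans[OF \<rho>] by (simp add: fam_rtrans_def)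
qed

lemma single_fam_rel_in_R_mult_fams: assumes "j \<in> I" "r \<in> rel_span m n N d" shows "single_fam j r \<in> R_mult_fams m n d k"
proof -
  have rF: "r \<in> free_tensors m n N d" by (rule rel_span_free_tensors[OF assms(2)]) simp
  have "single_fam j r \<in> fam_space m n d k" using rF assms(1) unfolding fam_space_def single_fam_def by auto
  moreover have "(\<lambda>y. single_fam j r i y - R_mult d k (\<lambda>\<rho>. 0) (delta i) y) \<in> rel_span m n N d" for i
    using R_mult_zero[OF fin_supp_delta] assms(2) csubspace_zero[OF csubspace_rel_span] unfolding single_fam_def by auto
  ultimately show ?thesis unfolding R_mult_fams_def by blast
qed

lemma proj_entry_W_endo: assumes "j \<in> I" shows "W_endo m n d k (proj_entry i j)"
proof (rule W_endo_linop[OF linop_proj_entry])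
  show "proj_entry i j f \<in> free_tensors m n N d" for f by (rule proj_entry_free_tensors)
  fix r assume r: "r \<in> rel_span m n N d"
  have "proj_entry i j r = single_fam j r i" unfolding proj_entry_def using avg_proj_fixes[OF single_fam_rel_in_R_mult_fams[OF assms r]] by simp
  then show "proj_entry i j r \<in> rel_span m n N d" using r csubspace_zero[OF csubspace_rel_span] unfolding single_fam_def by auto
qed

lemma proj_entry_comm: "W_commute m n d k (proj_entry i j) (R_mult d k c)"
  by (rule W_commute_eq) (use rtrans_equivariant_R_mult[OF linop_proj_entry rtrans_equivariant_proj_entry] free_tensors_fin_supp in auto)

lemma sum_single_fam_apply:
  assumes "finite J"
  shows "(\<Sum>j\<in>J. single_fam j (h j) i y) = (if i \<in> J then h i y else 0)"
proof -
  have "(\<Sum>j\<in>J. single_fam j (h j) i y) = (\<Sum>j\<in>J. if j = i then h i y else 0)"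
    by (rule sum.cong) (auto simp: single_fam_def)
  then show ?thesis using assms by (simp add: sum.delta)
qed

lemma delta_proj_entry_sum:
  assumes "i \<in> I"
  shows "delta i = (\<lambda>y. \<Sum>j\<in>I. proj_entry i j (delta j) y)"
proof -
  define Q where "Q = (\<lambda>i y. \<Sum>j\<in>I. single_fam j (delta j) i y)"
  have Q: "Q i = (if i \<in> I then delta i else (\<lambda>y. 0))" for i
    unfolding Q_def by (auto simp: fun_eq_iff sum_single_fam_apply[OF finite_basis_idx])
  have idP: "id \<in> perms N" unfolding perms_def by (simp add: permutes_id)
  have "Q \<in> fam_space m n d k" unfolding fam_space_def using Q free_tensors_delta by auto
  moreover have "(\<lambda>y. Q i y - R_mult d k (\<lambda>\<rho>'. if \<rho>' = id then 1 else 0) (delta i) y) \<in> rel_span m n N d"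
    if "i \<in> I" for i
    using that Q R_mult_single[OF fin_supp_delta idP] csubspace_zero[OF csubspace_rel_span] by simp
  ultimately have "Q \<in> R_mult_fams m n d k" unfolding R_mult_fams_def by blast
  then have "avg_proj Q = Q" by (rule avg_proj_fixes)
  moreover have "avg_proj Q = (\<lambda>i y. \<Sum>j\<in>I. proj_entry i j (delta j) y)"
    unfolding Q_def avg_proj_sum[OF finite_basis_idx] proj_entry_def ..
  ultimately show ?thesis using Q[of i] assms by metis
qed

lemma A_alg_commutant_W_eq_R_mult:
  assumes T: "W_endo m n d k T" and C: "\<forall>A\<in>A_alg m n d k. W_commute m n d k T A"
  shows "\<exists>b. W_eq m n d k T (R_mult d k b)"
proof -
  let ?R = "rel_span m n N d"
  have TP: "(\<lambda>y. T (proj_entry i j f) y - proj_entry i j (T f) y) \<in> ?R"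
    if "j \<in> I" "f \<in> free_tensors m n N d" for i j f
  proof -
    obtain A where A: "A \<in> A_alg m n d k" "W_eq m n d k (proj_entry i j) A"
      using R_mult_commutant_in_A_alg[OF proj_entry_W_endo[OF \<open>j \<in> I\<close>]] proj_entry_comm by blast
    have "W_commute m n d k T (proj_entry i j)"
      by (rule W_commute_W_eq[OF T C[rule_format, OF A(1)] A(2)])
         (auto intro: A_alg_props(2)[OF A(1)] proj_entry_free_tensors)
    then show ?thesis using that unfolding W_commute_def W_eq_def W_free_free_tensors W_rel_rel_span by auto
  qed
  define \<Psi> where "\<Psi> = (\<lambda>i y. \<Sum>j\<in>I. single_fam j (T (delta j)) i y)"
  have avg_\<Psi>: "avg_proj \<Psi> i = (\<lambda>y. \<Sum>j\<in>I. proj_entry i j (T (delta j)) y)" for i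
    unfolding \<Psi>_def avg_proj_sum[OF finite_basis_idx] proj_entry_def ..
  obtain b where b: "\<forall>i\<in>I. (\<lambda>y. avg_proj \<Psi> i y - R_mult d k b (delta i) y) \<in> ?R"
    using avg_proj_in_R_mult_fams[of \<Psi>] unfolding R_mult_fams_def by blast
  have "(\<lambda>y. T (delta i) y - R_mult d k b (delta i) y) \<in> ?R" if i: "i \<in> I" for i
  proof -
    have "T (delta i) = (\<lambda>y. \<Sum>j\<in>I. T (proj_entry i j (delta j)) y)"
      using W_endo_sum[OF T finite_basis_idx proj_entry_free_tensors, where c="\<lambda>_. 1"]
      by (subst delta_proj_entry_sum[OF i]) simp
    then have "(\<lambda>y. T (delta i) y - R_mult d k b (delta i) y)
        = (\<lambda>y. (\<Sum>j\<in>I. T (proj_entry i j (delta j)) y - proj_entry i j (T (delta j)) y)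
            + (avg_proj \<Psi> i y - R_mult d k b (delta i) y))"
      unfolding avg_\<Psi> by (simp add: sum_subtractf)
    also have "\<dots> \<in> ?R"
      by (rule csubspace_add[OF csubspace_rel_span csubspace_sum'[OF csubspace_rel_span finite_basis_idx]])
         (use TP free_tensors_delta b i in auto)
    finally show ?thesis .
  qed
  then show ?thesis using W_eq_on_basis[OF T linop_R_mult] by blast
qed

end

lemma A_alg_commutant_in_R_mult:
  assumes "W_endo m n d k T" "\<forall>A\<in>A_alg m n d k. W_commute m n d k T A"
  shows "\<exists>c. W_eq m n d k T (R_mult d k c)"
proof -
  obtain proj where "\<forall>x y. proj (x + y) = proj x + proj y"
    "\<forall>c x. proj (fam_scale c x) = fam_scale c (proj x)"
    "\<forall>x. proj x \<in> R_mult_fams m n d k" "\<forall>z\<in>R_mult_fams m n d k. proj z = z"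
    using fam_subspace_projection_exists[OF R_mult_fams_subspace] by blast
  then interpret R_mult_fams_projection m n d k proj by unfold_locales auto
  show ?thesis by (rule A_alg_commutant_W_eq_R_mult[OF assms])
qed

theorem theorem4p1:
  fixes m n d k :: nat
  assumes "1 \<le> m" and "1 \<le> n" and "1 \<le> d" and "k \<le> d"
  shows "(\<forall>A\<in>A_alg m n d k. W_endo m n d k A \<and> (\<forall>c. W_commute m n d k A (R_mult d k c)))
       \<and> (\<forall>T. W_endo m n d k T \<and> (\<forall>c. W_commute m n d k T (R_mult d k c))
              \<longrightarrow> (\<exists>A\<in>A_alg m n d k. W_eq m n d k T A))
       \<and> (\<forall>c. W_endo m n d k (R_mult d k c) \<and> (\<forall>A\<in>A_alg m n d k. W_commute m n d k (R_mult d k c) A))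
       \<and> (\<forall>T. W_endo m n d k T \<and> (\<forall>A\<in>A_alg m n d k. W_commute m n d k T A)
              \<longrightarrow> (\<exists>c. W_eq m n d k T (R_mult d k c)))"
proof (intro conjI)
  show "\<forall>T. W_endo m n d k T \<and> (\<forall>c. W_commute m n d k T (R_mult d k c))
      \<longrightarrow> (\<exists>A\<in>A_alg m n d k. W_eq m n d k T A)"
    using R_mult_commutant_in_A_alg by blast
  show "\<forall>T. W_endo m n d k T \<and> (\<forall>A\<in>A_alg m n d k. W_commute m n d k T A)
      \<longrightarrow> (\<exists>c. W_eq m n d k T (R_mult d k c))"
    using A_alg_commutant_in_R_mult by blast
qed (rule A_alg_endo_commutes R_mult_endo_commutes)+

end
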